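(* Let $N\ge 2$ and $\Omega=\mathbb{R}\times\omega\subset\mathbb{R}^N$, where $\omega\subset\mathbb{R}^{N-1}$ is a bounded connected open set of class $C^1$, with outward unit normal $n$ on $\partial\Omega$. Let $\psi\in C^2(\Omega,\mathbb{R})\cap C^1(\overline{\Omega},\mathbb{R})$ and $v=\nabla\psi$, with $v\in C^1(\Omega,\mathbb{R}^N)\cap C(\overline{\Omega},\mathbb{R}^N)$, $v\cdot n=0$ on $\partial\Omega$, and $\eta:=\inf_{\overline{\Omega}}|v|>0$ (no divergence-free condition is assumed). For $x\in\overline{\Omega}$, let $\xi_x$ be the maximal solution of $\xi_x'(\tau)=v(\xi_x(\tau))$, $\xi_x(0)=x$, defined on its maximal open interval $I_x=(\tau_x^-,\tau_x^+)$ with $-\infty\le\tau_x^-<0<\tau_x^+\le+\infty$ (and taking values in $\overline{\Omega}$). Then for each $x\in\overline{\Omega}$, $|\xi_x(\tau)|\to+\infty$ as $\tau\to\tau_x^-$ and as $\tau\to\tau_x^+$, and $\psi(\xi_x(\tau))\to\pm\infty$ as $\tau\to\tau_x^\pm$.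
   Context: The flow $\xi_x$ is well defined and unique on a maximal interval (by the Cauchy–Lipschitz theorem and the tangential condition $v\cdot n=0$); it stays in $\Omega$ if $x\in\Omega$ and in $\partial\Omega$ if $x\in\partial\Omega$. *)

theory Defs
  imports "HOL-Analysis.Analysis"
begin

definition C1_boundary_normal :: "'a::euclidean_space set \<Rightarrow> ('a \<Rightarrow> 'a) \<Rightarrow> bool" where
  "C1_boundary_normal w nrm \<longleftrightarrow>
     (\<forall>z\<in>frontier w. \<exists>r>0. \<exists>g G.
        (\<forall>y\<in>ball z r. (g has_derivative (\<lambda>h. G y \<bullet> h)) (at y) \<and> G y \<noteq> 0) \<and>
        continuous_on (ball z r) G \<and>
        w \<inter> ball z r = {y\<in>ball z r. g y < 0} \<and>
        nrm z = G z /\<^sub>R norm (G z))"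

definition flow_sol :: "('b::real_normed_vector \<Rightarrow> 'b) \<Rightarrow> 'b set \<Rightarrow> 'b \<Rightarrow> real set \<Rightarrow> (real \<Rightarrow> 'b) \<Rightarrow> bool" where
  "flow_sol v S x I xi \<longleftrightarrow> is_interval I \<and> open I \<and> 0 \<in> I \<and> xi 0 = x \<and>
     (\<forall>t\<in>I. xi t \<in> S \<and> (xi has_vector_derivative v (xi t)) (at t))"

definition max_flow_sol :: "('b::real_normed_vector \<Rightarrow> 'b) \<Rightarrow> 'b set \<Rightarrow> 'b \<Rightarrow> real set \<Rightarrow> (real \<Rightarrow> 'b) \<Rightarrow> bool" where
  "max_flow_sol v S x I xi \<longleftrightarrow> flow_sol v S x I xi \<and>
     (\<forall>J zeta. flow_sol v S x J zeta \<and> I \<subseteq> J \<and> (\<forall>t\<in>I. zeta t = xi t) \<longrightarrow> J = I)"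

definition upper_end :: "real set \<Rightarrow> real filter" where
  "upper_end I = (if bdd_above I then at_left (Sup I) else at_top)"

definition lower_end :: "real set \<Rightarrow> real filter" where
  "lower_end I = (if bdd_below I then at_right (Inf I) else at_bot)"

end

theory Submission
  imports Defs "HOL-Library.Diagonal_Subsequence"
begin

text \<open>
  Along a solution, \<open>(psi \<circ> xi)' = |v(xi)|\<^sup>2 \<ge> \<eta>\<^sup>2\<close>, so \<open>psi\<close> grows at least linearly in time,
  and since \<open>|xi'| = |v(xi)| \<le> |v(xi)|\<^sup>2 / \<eta>\<close> the length of the trajectory is bounded by the
  increase of \<open>psi\<close> divided by \<open>\<eta>\<close>. If \<open>psi(xi)\<close> stayed bounded towards a finite end of the
  maximal interval, the trajectory would have finite length and thus a limit in the closed
  cylinder, from which a local solution would extend \<open>xi\<close>, contradicting maximality. Hence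
  \<open>psi(xi) \<rightarrow> +\<infinity>\<close> at the upper end, so \<open>|xi| \<rightarrow> \<infinity>\<close> as \<open>psi\<close> is bounded on bounded parts of the
  cylinder; reversing time gives the lower end.

  Local solutions in the closed cylinder exist by a viability argument: the tangency
  \<open>v \<bullet> n = 0\<close> and the \<open>C\<^sup>1\<close> charts of the boundary make \<open>v\<close> uniformly subtangential to the
  cylinder (Nagumo's condition), so Euler polygons can be kept inside it at a cost \<open>o(h)\<close> per
  step, and a subsequence converges to a solution.
\<close>

section \<open>Euler polygons and viability\<close>

locale approximate_euler_scheme =
  fixes f :: "'b::euclidean_space \<Rightarrow> 'b" and X :: "nat \<Rightarrow> 'b"
    and S :: "'b set" and p :: 'b and r M h \<epsilon> :: real
  assumes r_pos: "r > 0" and M_ge_1: "M \<ge> 1"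
    and f_bounded: "\<And>q. q \<in> S \<inter> cball p r \<Longrightarrow> norm (f q) \<le> M"
    and h_pos: "h > 0" and \<epsilon>_nonneg: "0 \<le> \<epsilon>" and \<epsilon>_le_1: "\<epsilon> \<le> 1"
    and start: "X 0 = p" "p \<in> S"
    and step: "\<And>k. X k \<in> S \<inter> cball p r \<Longrightarrow>
                 X (Suc k) \<in> S \<and> norm (X (Suc k) - (X k + h *\<^sub>R f (X k))) \<le> \<epsilon> * h"
begin

abbreviation K where "K \<equiv> S \<inter> cball p r"

lemma step_norm_le:
  assumes "X k \<in> K" shows "norm (X (Suc k) - X k) \<le> 2 * M * h"
proof -
  have "norm (X (Suc k) - X k) \<le> norm (X (Suc k) - (X k + h *\<^sub>R f (X k))) + norm (h *\<^sub>R f (X k))"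
    using norm_triangle_ineq[of "X (Suc k) - (X k + h *\<^sub>R f (X k))" "h *\<^sub>R f (X k)"] by simp
  also have "\<dots> \<le> \<epsilon> * h + h * M"
    using step[OF assms] f_bounded[OF assms] h_pos by (intro add_mono) (auto intro: mult_left_mono)
  also have "\<dots> \<le> 2 * M * h"
    using mult_right_mono[OF \<epsilon>_le_1, of h] mult_right_mono[OF M_ge_1, of h] h_pos
    by (simp add: algebra_simps)
  finally show ?thesis .
qed

lemma stays_near_start:
  "real k * h \<le> r / (2 * M) \<Longrightarrow> X k \<in> K \<and> dist (X k) p \<le> 2 * M * real k * h"
proof (induction k)
  case 0
  then show ?case using start r_pos by auto
next
  case (Suc k)
  have "real k * h \<le> real (Suc k) * h" using h_pos by (simp add: mult_right_mono)
  with Suc have IH: "X k \<in> K" "dist (X k) p \<le> 2 * M * real k * h" by auto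
  have "dist (X (Suc k)) p \<le> dist (X (Suc k)) (X k) + dist (X k) p" by (rule dist_triangle)
  also have "\<dots> \<le> 2 * M * real (Suc k) * h"
    using step_norm_le[OF IH(1)] IH(2) by (simp add: dist_norm algebra_simps)
  finally have "dist (X (Suc k)) p \<le> 2 * M * real (Suc k) * h" .
  moreover have "2 * M * real (Suc k) * h \<le> r"
    using Suc.prems M_ge_1 by (simp add: field_simps mult.commute mult.left_commute)
  ultimately show ?case using step[OF IH(1)] by (simp add: dist_commute)
qed

lemma increment_le:
  "real (i + d) * h \<le> r / (2 * M) \<Longrightarrow> norm (X (i + d) - X i) \<le> 2 * M * real d * h"
proof (induction d)
  case (Suc d)
  have "real (i + d) * h \<le> real (i + Suc d) * h" using h_pos by (simp add: mult_right_mono)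
  with Suc.prems have le: "real (i + d) * h \<le> r / (2 * M)" by linarith
  have "norm (X (i + Suc d) - X i) \<le> norm (X (Suc (i + d)) - X (i + d)) + norm (X (i + d) - X i)"
    using norm_triangle_ineq[of "X (Suc (i + d)) - X (i + d)" "X (i + d) - X i"] by simp
  also have "\<dots> \<le> 2 * M * real (Suc d) * h"
    using step_norm_le stays_near_start[OF le] Suc.IH[OF le] by (fastforce simp: algebra_simps)
  finally show ?case .
qed simp

lemma increment_linearization:
  assumes uc: "\<And>q q'. q \<in> K \<Longrightarrow> q' \<in> K \<Longrightarrow> dist q q' < \<delta> \<Longrightarrow> norm (f q - f q') \<le> e"
  shows "real (i + d) * h \<le> r / (2 * M) \<Longrightarrow> 2 * M * real d * h < \<delta> \<Longrightarrow>
    norm (X (i + d) - X i - (real d * h) *\<^sub>R f (X i)) \<le> real d * h * (\<epsilon> + e)"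
proof (induction d)
  case (Suc d)
  have "real (i + d) * h \<le> real (i + Suc d) * h" using h_pos by (simp add: mult_right_mono)
  with Suc.prems have le: "real (i + d) * h \<le> r / (2 * M)" by linarith
  have "2 * M * real d * h \<le> 2 * M * real (Suc d) * h" using h_pos M_ge_1 by (simp add: mult_right_mono)
  with Suc.prems have lt: "2 * M * real d * h < \<delta>" by linarith
  have XK: "X (i + d) \<in> K" using stays_near_start le by blast
  have "real i * h \<le> real (i + d) * h" using h_pos by (simp add: mult_right_mono)
  then have XiK: "X i \<in> K" using stays_near_start le by (meson order_trans)
  have "dist (X (i + d)) (X i) < \<delta>" using increment_le[OF le] lt by (simp add: dist_norm)
  then have osc: "norm (f (X (i + d)) - f (X i)) \<le> e" using uc XK XiK by blast
  have "X (i + Suc d) - X i - (real (Suc d) * h) *\<^sub>R f (X i)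
     = (X (Suc (i + d)) - (X (i + d) + h *\<^sub>R f (X (i + d))))
       + (X (i + d) - X i - (real d * h) *\<^sub>R f (X i)) + h *\<^sub>R (f (X (i + d)) - f (X i))"
    by (simp add: algebra_simps)
  then have "norm (X (i + Suc d) - X i - (real (Suc d) * h) *\<^sub>R f (X i))
     \<le> norm (X (Suc (i + d)) - (X (i + d) + h *\<^sub>R f (X (i + d))))
       + norm (X (i + d) - X i - (real d * h) *\<^sub>R f (X i)) + h * norm (f (X (i + d)) - f (X i))"
    using h_pos by (metis (no_types) norm_triangle_le norm_triangle_ineq add_mono order_refl
        norm_scaleR abs_of_pos)
  also have "\<dots> \<le> \<epsilon> * h + real d * h * (\<epsilon> + e) + h * e"
    using step[OF XK] Suc.IH[OF le lt] osc h_pos by (intro add_mono mult_left_mono) auto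
  also have "\<dots> = real (Suc d) * h * (\<epsilon> + e)" by (simp add: algebra_simps)
  finally show ?case .
qed simp

end

definition step_interpolation :: "real \<Rightarrow> (nat \<Rightarrow> 'b) \<Rightarrow> real \<Rightarrow> 'b" where
  "step_interpolation h X t = X (nat \<lfloor>t / h\<rfloor>)"

lemma nat_floor_divide_bounds:
  fixes h t :: real
  assumes "h > 0" "t \<ge> 0"
  shows "real (nat \<lfloor>t / h\<rfloor>) * h \<le> t" "t < real (nat \<lfloor>t / h\<rfloor>) * h + h"
  using floor_divide_lower[OF assms(1), of t] floor_divide_upper[OF assms(1), of t] assms
  by (simp_all add: algebra_simps)

context approximate_euler_scheme
begin

abbreviation Y where "Y \<equiv> step_interpolation h X"

lemma step_index_mono: "t \<le> t' \<Longrightarrow> nat \<lfloor>t / h\<rfloor> \<le> nat \<lfloor>t' / h\<rfloor>"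
  using h_pos by (intro nat_mono floor_mono divide_right_mono) auto

lemma interpolation_in_ball: "t \<in> {0..r / (2 * M)} \<Longrightarrow> Y t \<in> K"
  using stays_near_start nat_floor_divide_bounds(1)[OF h_pos, of t] unfolding step_interpolation_def
  by (meson atLeastAtMost_iff order_trans)

lemma interpolation_step_count:
  assumes "t \<in> {0..r / (2 * M)}" "t' \<in> {0..r / (2 * M)}" "t \<le> t'"
  defines "k \<equiv> nat \<lfloor>t / h\<rfloor>" and "d \<equiv> nat \<lfloor>t' / h\<rfloor> - nat \<lfloor>t / h\<rfloor>"
  shows "Y t = X k" "Y t' = X (k + d)" "real (k + d) * h \<le> r / (2 * M)"
    "\<bar>real d * h - (t' - t)\<bar> \<le> h"
proof -
  have m: "k \<le> nat \<lfloor>t' / h\<rfloor>" unfolding k_def using step_index_mono[OF assms(3)] .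
  then have kd: "k + d = nat \<lfloor>t' / h\<rfloor>" unfolding d_def k_def by simp
  show "Y t = X k" "Y t' = X (k + d)"
    unfolding k_def kd[symmetric] step_interpolation_def k_def by simp_all
  show "real (k + d) * h \<le> r / (2 * M)"
    unfolding kd using nat_floor_divide_bounds(1)[OF h_pos, of t'] assms by auto
  have "t \<ge> 0" "t' \<ge> 0" using assms(1-3) by auto
  then have "real k * h \<le> t" "t < real k * h + h" "real (k + d) * h \<le> t'" "t' < real (k + d) * h + h"
    unfolding kd unfolding k_def by (blast intro: nat_floor_divide_bounds[OF h_pos])+
  then show "\<bar>real d * h - (t' - t)\<bar> \<le> h" by (simp add: algebra_simps)
qed

lemma interpolation_dist_le:
  assumes "t \<in> {0..r / (2 * M)}" "t' \<in> {0..r / (2 * M)}"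
  shows "dist (Y t) (Y t') \<le> 2 * M * (\<bar>t - t'\<bar> + h)"
proof -
  have *: "dist (Y t) (Y t') \<le> 2 * M * (t' - t + h)"
    if "t \<in> {0..r / (2 * M)}" "t' \<in> {0..r / (2 * M)}" "t \<le> t'" for t t'
  proof -
    note c = interpolation_step_count[OF that]
    have "dist (Y t) (Y t') \<le> 2 * M * (real (nat \<lfloor>t' / h\<rfloor> - nat \<lfloor>t / h\<rfloor>) * h)"
      using increment_le[OF c(3)] unfolding c(1,2) by (simp add: dist_norm norm_minus_commute)
    also have "\<dots> \<le> 2 * M * (t' - t + h)"
      using c(4) M_ge_1 by (intro mult_left_mono) auto
    finally show ?thesis .
  qed
  show ?thesis
    using *[OF assms] *[OF assms(2,1)] by (cases "t \<le> t'") (auto simp: dist_commute)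
qed

lemma interpolation_linearization:
  assumes t: "t \<in> {0..r / (2 * M)}" "t' \<in> {0..r / (2 * M)}" "t \<le> t'"
    and uc: "\<And>q q'. q \<in> K \<Longrightarrow> q' \<in> K \<Longrightarrow> dist q q' < \<delta> \<Longrightarrow> norm (f q - f q') \<le> e"
    and e: "e \<ge> 0" and small: "2 * M * (t' - t + h) < \<delta>"
  shows "norm (Y t' - Y t - (t' - t) *\<^sub>R f (Y t)) \<le> (t' - t + h) * (\<epsilon> + e) + h * M"
proof -
  define k d where "k = nat \<lfloor>t / h\<rfloor>" and "d = nat \<lfloor>t' / h\<rfloor> - nat \<lfloor>t / h\<rfloor>"
  note c = interpolation_step_count[OF t, folded k_def d_def]
  have dh: "real d * h \<le> t' - t + h" using c(4) by linarith
  have "2 * M * (real d * h) \<le> 2 * M * (t' - t + h)"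
    by (rule mult_left_mono[OF dh]) (use M_ge_1 in simp)
  then have "2 * M * real d * h < \<delta>" using small by (simp add: mult.assoc)
  then have lin: "norm (X (k + d) - X k - (real d * h) *\<^sub>R f (X k)) \<le> real d * h * (\<epsilon> + e)"
    using increment_linearization[OF uc c(3)] by blast
  have XK: "X k \<in> K" using c(1) interpolation_in_ball[OF t(1)] by simp
  have "Y t' - Y t - (t' - t) *\<^sub>R f (Y t)
      = (X (k + d) - X k - (real d * h) *\<^sub>R f (X k)) + (real d * h - (t' - t)) *\<^sub>R f (X k)"
    unfolding c(1,2) by (simp add: algebra_simps)
  then have "norm (Y t' - Y t - (t' - t) *\<^sub>R f (Y t))
      \<le> norm (X (k + d) - X k - (real d * h) *\<^sub>R f (X k)) + \<bar>real d * h - (t' - t)\<bar> * norm (f (X k))"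
    by (metis norm_scaleR norm_triangle_ineq)
  also have "\<dots> \<le> (t' - t + h) * (\<epsilon> + e) + h * M"
    using lin mult_right_mono[OF dh, of "\<epsilon> + e"] \<epsilon>_nonneg e c(4) f_bounded[OF XK]
    by (intro add_mono mult_mono) auto
  finally show ?thesis .
qed

end

lemma compact_norm_bound:
  assumes "compact K" "continuous_on K f"
  obtains M where "M \<ge> 1" "\<And>q. q \<in> K \<Longrightarrow> norm (f q) \<le> M"
proof -
  obtain B where "\<forall>y\<in>f ` K. norm y \<le> B"
    using compact_imp_bounded[OF compact_continuous_image[OF assms(2,1)]] unfolding bounded_iff by blast
  then show ?thesis using that[of "max 1 B"] by force
qed

lemma compact_diagonal_subsequence:
  fixes F :: "nat \<Rightarrow> nat \<Rightarrow> 'b::euclidean_space"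
  assumes K: "compact K" and FK: "\<And>n k. F n k \<in> K"
  obtains \<sigma> where "strict_mono \<sigma>" "\<And>k. convergent (\<lambda>n. F (\<sigma> n) k)"
proof -
  let ?P = "\<lambda>k s. convergent (\<lambda>n. F (s n) k)"
  interpret subseqs ?P
  proof unfold_locales
    fix k :: nat and s :: "nat \<Rightarrow> nat"
    obtain l s' where "strict_mono s'" "((\<lambda>n. F (s n) k) \<circ> s') \<longlonglongrightarrow> l"
      using K FK compact_imp_seq_compact seq_compactE by metis
    then show "\<exists>s'. strict_mono s' \<and> convergent (\<lambda>n. F ((s \<circ> s') n) k)"
      by (auto simp: comp_def convergent_def)
  qed
  have "?P k diagseq" for k
  proof -
    have "?P k (diagseq \<circ> (+) (Suc k))"
      unfolding diagseq_seqseq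
      using convergent_subseq_convergent[OF seqseq_holds[of k] subseq_diagonal_rest[of "Suc k"]]
      by (simp add: comp_def)
    then obtain l where "(\<lambda>n. F (diagseq (n + Suc k)) k) \<longlonglongrightarrow> l"
      by (auto simp: comp_def add.commute convergent_def)
    then have "(\<lambda>n. F (diagseq n) k) \<longlonglongrightarrow> l" by (rule LIMSEQ_offset)
    then show ?thesis by (auto simp: convergent_def)
  qed
  with subseq_diagseq show ?thesis by (rule that)
qed

text \<open>An Ascoli-type argument: equicontinuity is only required up to an error \<open>h n \<rightarrow> 0\<close>,
  which is what step functions provide.\<close>

lemma almost_equicontinuous_convergent_from_dense:
  fixes Y :: "nat \<Rightarrow> real \<Rightarrow> 'b::complete_space"
  assumes L: "L \<ge> 0" and h: "h \<longlonglongrightarrow> 0"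
    and Y_dist: "\<And>n t t'. t \<in> A \<Longrightarrow> t' \<in> A \<Longrightarrow> dist (Y n t) (Y n t') \<le> L * (\<bar>t - t'\<bar> + h n)"
    and dense: "\<And>t e. t \<in> A \<Longrightarrow> e > 0 \<Longrightarrow> \<exists>c\<in>D. c \<in> A \<and> \<bar>t - c\<bar> \<le> e"
    and convergent_on_D: "\<And>c. c \<in> D \<Longrightarrow> convergent (\<lambda>n. Y n c)"
    and t: "t \<in> A"
  shows "convergent (\<lambda>n. Y n t)"
proof (rule Cauchy_convergent, rule metric_CauchyI)
  fix e :: real assume e: "e > 0"
  define e1 where "e1 = e / (8 * (L + 1))"
  have e1: "e1 > 0" using e L by (simp add: e1_def)
  have "L + 1 > 0" using L by simp
  have "L * (e1 + e1) \<le> (L + 1) * (e1 + e1)" using e1 by (intro mult_right_mono) auto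
  also have "\<dots> = e / 4"
  proof -
    have "(L + 1) * e1 = e / 8" using \<open>L + 1 > 0\<close> unfolding e1_def by (simp add: divide_simps)
    then show ?thesis by (simp add: distrib_left)
  qed
  finally have L_e1: "L * (e1 + e1) \<le> e / 4" .
  obtain c where c: "c \<in> D" "c \<in> A" "\<bar>t - c\<bar> \<le> e1" using dense[OF t e1(1)] by blast
  have near: "dist (Y n t) (Y n c) \<le> e / 4" if "\<bar>h n\<bar> < e1" for n
  proof -
    have "dist (Y n t) (Y n c) \<le> L * (\<bar>t - c\<bar> + h n)" using Y_dist t c(2) by blast
    also have "\<dots> \<le> L * (e1 + e1)" using c(3) that L by (intro mult_left_mono) auto
    finally show ?thesis using L_e1 by linarith
  qed
  obtain N1 where N1: "\<And>m n. m \<ge> N1 \<Longrightarrow> n \<ge> N1 \<Longrightarrow> dist (Y m c) (Y n c) < e / 4"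
    using convergent_on_D[OF c(1)] e
    by (metis convergent_Cauchy metric_CauchyD zero_less_divide_iff zero_less_numeral)
  obtain N2 where N2: "\<And>n. n \<ge> N2 \<Longrightarrow> \<bar>h n\<bar> < e1"
    using h e1 unfolding tendsto_iff eventually_sequentially by (auto simp: dist_real_def)
  show "\<exists>N. \<forall>m\<ge>N. \<forall>n\<ge>N. dist (Y m t) (Y n t) < e"
  proof (intro exI allI impI)
    fix m n assume "m \<ge> max N1 N2" "n \<ge> max N1 N2"
    then have "dist (Y m t) (Y m c) \<le> e / 4" "dist (Y m c) (Y n c) < e / 4"
        "dist (Y n c) (Y n t) \<le> e / 4"
      using near N1 N2 by (auto simp: dist_commute)
    then show "dist (Y m t) (Y n t) < e"
      using dist_triangle[of "Y m t" "Y n t" "Y m c"] dist_triangle[of "Y m c" "Y n t" "Y n c"] e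
      by linarith
  qed
qed

lemma almost_equicontinuous_convergent_subseq:
  fixes Y :: "nat \<Rightarrow> real \<Rightarrow> 'b::euclidean_space"
  assumes K: "compact K" and YK: "\<And>n t. t \<in> {a..b} \<Longrightarrow> Y n t \<in> K" and ab: "a \<le> b"
    and L: "L \<ge> 0" and h: "h \<longlonglongrightarrow> 0"
    and Y_dist: "\<And>n t t'. t \<in> {a..b} \<Longrightarrow> t' \<in> {a..b} \<Longrightarrow> dist (Y n t) (Y n t') \<le> L * (\<bar>t - t'\<bar> + h n)"
  obtains \<sigma> where "strict_mono \<sigma>" "\<And>t. t \<in> {a..b} \<Longrightarrow> convergent (\<lambda>n. Y (\<sigma> n) t)"
proof -
  obtain q :: "nat \<Rightarrow> real" where q: "range q = \<rat>"
    using range_from_nat_into[of "\<rat>"] countable_rat Rats_0 by blast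
  define clamp where "clamp t = max a (min b t)" for t
  have clamp: "clamp t \<in> {a..b}" for t unfolding clamp_def using ab by auto
  obtain \<sigma> where \<sigma>: "strict_mono \<sigma>" and cnv: "\<And>k. convergent (\<lambda>n. Y (\<sigma> n) (clamp (q k)))"
    using compact_diagonal_subsequence[OF K, of "\<lambda>n k. Y n (clamp (q k))"] YK clamp by blast
  have dense: "\<exists>c\<in>range (clamp \<circ> q). c \<in> {a..b} \<and> \<bar>t - c\<bar> \<le> e" if "t \<in> {a..b}" "e > 0" for t e
  proof -
    obtain s where "s \<in> \<rat>" "t - e < s" "s < t + e"
      using Rats_dense_in_real[of "t - e" "t + e"] \<open>e > 0\<close> by auto
    moreover obtain k where "q k = s" using q \<open>s \<in> \<rat>\<close> by (metis rangeE)
    ultimately have "\<bar>t - clamp (q k)\<bar> \<le> e" using that unfolding clamp_def by auto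
    moreover have "clamp (q k) \<in> range (clamp \<circ> q)" by simp
    ultimately show ?thesis using clamp by blast
  qed
  have h\<sigma>: "(\<lambda>n. h (\<sigma> n)) \<longlonglongrightarrow> 0" using LIMSEQ_subseq_LIMSEQ[OF h \<sigma>] by (simp add: comp_def)
  have cnv': "convergent (\<lambda>n. Y (\<sigma> n) c)" if "c \<in> range (clamp \<circ> q)" for c
    using that cnv by auto
  have "convergent (\<lambda>n. Y (\<sigma> n) t)" if "t \<in> {a..b}" for t
    by (rule almost_equicontinuous_convergent_from_dense[OF L h\<sigma> Y_dist dense cnv' that])
  with \<sigma> show ?thesis by (rule that)
qed

lemma has_vector_derivative_from_forward_increments:
  fixes y g :: "real \<Rightarrow> 'b::real_normed_vector"
  assumes g: "continuous_on {a..b} g"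
    and fwd: "\<And>e. e > 0 \<Longrightarrow> \<exists>\<delta>>0. \<forall>t\<in>{a..b}. \<forall>t'\<in>{a..b}. t \<le> t' \<and> t' - t < \<delta> \<longrightarrow>
                 norm (y t' - y t - (t' - t) *\<^sub>R g t) \<le> e * (t' - t)"
    and t: "t \<in> {a..b}"
  shows "(y has_vector_derivative g t) (at t within {a..b})"
  unfolding has_vector_derivative_def has_derivative_within_alt
proof (intro conjI allI impI bounded_linear_scaleR_left)
  fix e :: real assume e: "e > 0"
  obtain \<delta>1 where \<delta>1: "\<delta>1 > 0" and lin: "\<And>t t'. t \<in> {a..b} \<Longrightarrow> t' \<in> {a..b} \<Longrightarrow> t \<le> t' \<Longrightarrow>
      t' - t < \<delta>1 \<Longrightarrow> norm (y t' - y t - (t' - t) *\<^sub>R g t) \<le> e / 2 * (t' - t)"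
    using fwd[of "e / 2"] e by auto
  obtain \<delta>2 where \<delta>2: "\<delta>2 > 0" and osc: "\<And>t t'. t \<in> {a..b} \<Longrightarrow> t' \<in> {a..b} \<Longrightarrow>
      dist t' t < \<delta>2 \<Longrightarrow> dist (g t') (g t) < e / 2"
    using compact_uniformly_continuous[OF g compact_Icc] e
    unfolding uniformly_continuous_on_def by (metis half_gt_zero)
  show "\<exists>d>0. \<forall>t'\<in>{a..b}. norm (t' - t) < d \<longrightarrow>
      norm (y t' - y t - (t' - t) *\<^sub>R g t) \<le> e * norm (t' - t)"
  proof (intro exI conjI ballI impI)
    show "min \<delta>1 \<delta>2 > 0" using \<delta>1 \<delta>2 by simp
    fix t' assume t': "t' \<in> {a..b}" and close: "norm (t' - t) < min \<delta>1 \<delta>2"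
    show "norm (y t' - y t - (t' - t) *\<^sub>R g t) \<le> e * norm (t' - t)"
    proof (cases "t \<le> t'")
      case True
      have "e / 2 * (t' - t) \<le> e * (t' - t)" using True e by (intro mult_right_mono) auto
      then show ?thesis using lin[OF t t' True] close True by auto
    next
      case False
      have "y t' - y t - (t' - t) *\<^sub>R g t
          = - (y t - y t' - (t - t') *\<^sub>R g t') + (t - t') *\<^sub>R (g t - g t')"
        by (simp add: algebra_simps)
      then have "norm (y t' - y t - (t' - t) *\<^sub>R g t)
          \<le> norm (y t - y t' - (t - t') *\<^sub>R g t') + (t - t') * norm (g t - g t')"
        using False by (metis norm_minus_cancel norm_scaleR norm_triangle_ineq abs_of_nonneg
            diff_ge_0_iff_ge nle_le)
      also have "\<dots> \<le> e / 2 * (t - t') + (t - t') * (e / 2)"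
        using lin[OF t' t] osc[OF t' t] close False
        by (intro add_mono mult_left_mono) (auto simp: dist_norm norm_minus_commute)
      also have "\<dots> = e * norm (t' - t)" using False by simp
      finally show ?thesis .
    qed
  qed
qed

definition uniformly_subtangential :: "'b::real_normed_vector set \<Rightarrow> ('b \<Rightarrow> 'b) \<Rightarrow> 'b \<Rightarrow> real \<Rightarrow> bool" where
  "uniformly_subtangential S f p r \<longleftrightarrow>
     (\<forall>\<epsilon>>0. \<exists>h0>0. \<forall>q\<in>S \<inter> cball p r. \<forall>h. 0 < h \<and> h \<le> h0 \<longrightarrow>
        (\<exists>q'\<in>S. dist q' (q + h *\<^sub>R f q) \<le> \<epsilon> * h))"

definition forward_solvable :: "('b::real_normed_vector \<Rightarrow> 'b) \<Rightarrow> 'b set \<Rightarrow> 'b \<Rightarrow> bool" where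
  "forward_solvable f S p \<longleftrightarrow>
     (\<exists>a>0. \<exists>y. y 0 = p \<and>
        (\<forall>t\<in>{0..a}. y t \<in> S \<and> (y has_vector_derivative f (y t)) (at t within {0..a})))"

lemma one_over_Suc_tendsto_0: "(\<lambda>n. 1 / (real n + 1)) \<longlonglongrightarrow> 0"
  using LIMSEQ_inverse_real_of_nat by (simp add: inverse_eq_divide add.commute)

lemma approximate_euler_schemes_exist:
  assumes ut: "uniformly_subtangential S f p r" and r: "r > 0" and M: "M \<ge> 1"
    and f_bounded: "\<And>q. q \<in> S \<inter> cball p r \<Longrightarrow> norm (f q) \<le> M" and p: "p \<in> S"
  obtains h X where "\<And>n. approximate_euler_scheme f (X n) S p r M (h n) (1 / (real n + 1))"
    and "h \<longlonglongrightarrow> 0"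
proof -
  have "\<forall>n::nat. \<exists>h0>0. \<forall>q\<in>S \<inter> cball p r. \<forall>h. 0 < h \<and> h \<le> h0 \<longrightarrow>
          (\<exists>q'\<in>S. dist q' (q + h *\<^sub>R f q) \<le> 1 / (real n + 1) * h)"
  proof
    fix n :: nat
    have "1 / (real n + 1) > 0" by simp
    then show "\<exists>h0>0. \<forall>q\<in>S \<inter> cball p r. \<forall>h. 0 < h \<and> h \<le> h0 \<longrightarrow>
        (\<exists>q'\<in>S. dist q' (q + h *\<^sub>R f q) \<le> 1 / (real n + 1) * h)"
      using ut unfolding uniformly_subtangential_def by blast
  qed
  then obtain H where H_pos: "\<And>n. H n > 0" and H: "\<And>n q h. q \<in> S \<inter> cball p r \<Longrightarrow> 0 < h \<Longrightarrow>
      h \<le> H n \<Longrightarrow> \<exists>q'\<in>S. dist q' (q + h *\<^sub>R f q) \<le> 1 / (real n + 1) * h"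
    by metis
  define h where "h n = min (H n) (1 / (real n + 1))" for n
  define euler_step where "euler_step n q =
      (SOME q'. q' \<in> S \<and> dist q' (q + h n *\<^sub>R f q) \<le> 1 / (real n + 1) * h n)" for n q
  define X where "X n k = (euler_step n ^^ k) p" for n k
  have h_pos: "h n > 0" for n unfolding h_def using H_pos by simp
  have schemes: "approximate_euler_scheme f (X n) S p r M (h n) (1 / (real n + 1))" for n
  proof
    fix k assume "X n k \<in> S \<inter> cball p r"
    then have "\<exists>q'. q' \<in> S \<and> dist q' (X n k + h n *\<^sub>R f (X n k)) \<le> 1 / (real n + 1) * h n"
      using H[of "X n k" "h n" n] h_pos[of n] unfolding h_def by auto
    then have "euler_step n (X n k) \<in> S \<and>
        dist (euler_step n (X n k)) (X n k + h n *\<^sub>R f (X n k)) \<le> 1 / (real n + 1) * h n"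
      unfolding euler_step_def by (rule someI_ex)
    then show "X n (Suc k) \<in> S \<and>
        norm (X n (Suc k) - (X n k + h n *\<^sub>R f (X n k))) \<le> 1 / (real n + 1) * h n"
      by (simp add: X_def dist_norm)
  qed (use r M f_bounded h_pos p in \<open>auto simp: X_def\<close>)
  have "h n \<le> 1 / (real n + 1)" for n unfolding h_def by simp
  then have "h \<longlonglongrightarrow> 0"
    by (intro tendsto_sandwich[OF _ _ tendsto_const one_over_Suc_tendsto_0])
       (auto intro!: always_eventually less_imp_le[OF h_pos])
  with schemes show ?thesis by (rule that)
qed

lemma euler_limit_forward_estimate:
  assumes schemes: "\<And>n. approximate_euler_scheme f (X n) S p r M (h n) (\<epsilon> n)"
    and h: "h \<longlonglongrightarrow> 0" and \<epsilon>: "\<epsilon> \<longlonglongrightarrow> 0" and f: "continuous_on S f"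
    and y: "\<And>t. t \<in> {0..r / (2 * M)} \<Longrightarrow> (\<lambda>n. step_interpolation (h n) (X n) t) \<longlonglongrightarrow> y t"
    and yS: "\<And>t. t \<in> {0..r / (2 * M)} \<Longrightarrow> y t \<in> S"
    and uc: "\<And>q q'. q \<in> S \<inter> cball p r \<Longrightarrow> q' \<in> S \<inter> cball p r \<Longrightarrow> dist q q' < \<delta> \<Longrightarrow>
               norm (f q - f q') \<le> e"
    and e: "e \<ge> 0"
    and t: "t \<in> {0..r / (2 * M)}" "t' \<in> {0..r / (2 * M)}" "t \<le> t'" and small: "2 * M * (t' - t) < \<delta>"
  shows "norm (y t' - y t - (t' - t) *\<^sub>R f (y t)) \<le> (t' - t) * e"
proof -
  let ?Y = "\<lambda>n. step_interpolation (h n) (X n)"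
  have "(\<lambda>n. 2 * M * (t' - t + h n)) \<longlonglongrightarrow> 2 * M * (t' - t + 0)"
    by (intro tendsto_intros h)
  then have "\<forall>\<^sub>F n in sequentially. 2 * M * (t' - t + h n) < \<delta>"
    using small by (simp add: order_tendstoD(2))
  then have bound: "\<forall>\<^sub>F n in sequentially.
      norm (?Y n t' - ?Y n t - (t' - t) *\<^sub>R f (?Y n t)) \<le> (t' - t + h n) * (\<epsilon> n + e) + h n * M"
    by eventually_elim
      (rule approximate_euler_scheme.interpolation_linearization[OF schemes t uc e], auto)
  have fY: "(\<lambda>n. f (?Y n t)) \<longlonglongrightarrow> f (y t)"
    using approximate_euler_scheme.interpolation_in_ball[OF schemes t(1)]
    by (intro continuous_on_tendsto_compose[OF f y[OF t(1)] yS[OF t(1)]]) auto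
  have "(\<lambda>n. norm (?Y n t' - ?Y n t - (t' - t) *\<^sub>R f (?Y n t)))
      \<longlonglongrightarrow> norm (y t' - y t - (t' - t) *\<^sub>R f (y t))"
    by (intro tendsto_intros y t fY)
  moreover have "(\<lambda>n. (t' - t + h n) * (\<epsilon> n + e) + h n * M) \<longlonglongrightarrow> (t' - t + 0) * (0 + e) + 0 * M"
    by (intro tendsto_intros h \<epsilon>)
  ultimately show ?thesis using bound by (auto intro: tendsto_le[OF trivial_limit_sequentially])
qed

lemma euler_interpolations_limit:
  assumes schemes: "\<And>n. approximate_euler_scheme f (X n) S p r M (h n) (\<epsilon> n)"
    and h: "h \<longlonglongrightarrow> 0" and S: "closed S"
  obtains \<sigma> y where "strict_mono \<sigma>"
    and "\<And>t. t \<in> {0..r / (2 * M)} \<Longrightarrow> (\<lambda>n. step_interpolation (h (\<sigma> n)) (X (\<sigma> n)) t) \<longlonglongrightarrow> y t"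
    and "\<And>t. t \<in> {0..r / (2 * M)} \<Longrightarrow> y t \<in> S \<inter> cball p r" and "y 0 = p"
    and "\<And>t t'. t \<in> {0..r / (2 * M)} \<Longrightarrow> t' \<in> {0..r / (2 * M)} \<Longrightarrow> dist (y t) (y t') \<le> 2 * M * dist t t'"
proof -
  let ?K = "S \<inter> cball p r" and ?Y = "\<lambda>n. step_interpolation (h n) (X n)"
  have K: "compact ?K" using S by (simp add: closed_Int_compact)
  have M: "M \<ge> 1" "r > 0" using approximate_euler_scheme.M_ge_1 approximate_euler_scheme.r_pos schemes
    by blast+
  then have "0 \<le> r / (2 * M)" "0 \<le> 2 * M" by auto
  note in_ball = approximate_euler_scheme.interpolation_in_ball[OF schemes]
  note dist_le = approximate_euler_scheme.interpolation_dist_le[OF schemes]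
  obtain \<sigma> where \<sigma>: "strict_mono \<sigma>"
    and cnv: "\<And>t. t \<in> {0..r / (2 * M)} \<Longrightarrow> convergent (\<lambda>n. ?Y (\<sigma> n) t)"
    using almost_equicontinuous_convergent_subseq[OF K in_ball \<open>0 \<le> r / (2 * M)\<close> \<open>0 \<le> 2 * M\<close> h dist_le]
    by blast
  define y where "y t = lim (\<lambda>n. ?Y (\<sigma> n) t)" for t
  have y: "(\<lambda>n. ?Y (\<sigma> n) t) \<longlonglongrightarrow> y t" if "t \<in> {0..r / (2 * M)}" for t
    using cnv[OF that] unfolding y_def by (simp add: convergent_LIMSEQ_iff)
  have yK: "y t \<in> ?K" if "t \<in> {0..r / (2 * M)}" for t
    using closed_sequentially[OF compact_imp_closed[OF K] _ y[OF that]] in_ball[OF that] by blast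
  have "?Y (\<sigma> n) 0 = p" for n
    using approximate_euler_scheme.start(1)[OF schemes] by (simp add: step_interpolation_def)
  then have y0: "y 0 = p" using y[of 0] \<open>0 \<le> r / (2 * M)\<close> by (simp add: LIMSEQ_const_iff)
  have h\<sigma>: "(\<lambda>n. h (\<sigma> n)) \<longlonglongrightarrow> 0" using LIMSEQ_subseq_LIMSEQ[OF h \<sigma>] by (simp add: comp_def)
  have "dist (y t) (y t') \<le> 2 * M * dist t t'"
    if "t \<in> {0..r / (2 * M)}" "t' \<in> {0..r / (2 * M)}" for t t'
  proof -
    have "(\<lambda>n. 2 * M * (\<bar>t - t'\<bar> + h (\<sigma> n))) \<longlonglongrightarrow> 2 * M * (\<bar>t - t'\<bar> + 0)"
      by (intro tendsto_intros h\<sigma>)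
    then show ?thesis
      using tendsto_le[OF _ _ tendsto_dist[OF y[OF that(1)] y[OF that(2)]]] dist_le[OF that]
      by (simp add: dist_real_def)
  qed
  with \<sigma> y yK y0 show ?thesis by (rule that)
qed

theorem subtangential_imp_forward_solvable:
  fixes f :: "'b::euclidean_space \<Rightarrow> 'b"
  assumes S: "closed S" and f: "continuous_on S f" and p: "p \<in> S" and r: "r > 0"
    and ut: "uniformly_subtangential S f p r"
  shows "forward_solvable f S p"
proof -
  let ?K = "S \<inter> cball p r"
  have K: "compact ?K" using S by (simp add: closed_Int_compact)
  have fK: "continuous_on ?K f" using f by (rule continuous_on_subset) auto
  obtain M where M: "M \<ge> 1" "\<And>q. q \<in> ?K \<Longrightarrow> norm (f q) \<le> M"
    using compact_norm_bound[OF K fK] by blast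
  define a where "a = r / (2 * M)"
  have a: "a > 0" using r M by (simp add: a_def)
  obtain h X where schemes: "\<And>n. approximate_euler_scheme f (X n) S p r M (h n) (1 / (real n + 1))"
    and h: "h \<longlonglongrightarrow> 0"
    using approximate_euler_schemes_exist[OF ut r M p] by blast
  obtain \<sigma> y where \<sigma>: "strict_mono \<sigma>"
    and y: "\<And>t. t \<in> {0..a} \<Longrightarrow> (\<lambda>n. step_interpolation (h (\<sigma> n)) (X (\<sigma> n)) t) \<longlonglongrightarrow> y t"
    and yK: "\<And>t. t \<in> {0..a} \<Longrightarrow> y t \<in> ?K" and y0: "y 0 = p"
    and lipschitz: "\<And>t t'. t \<in> {0..a} \<Longrightarrow> t' \<in> {0..a} \<Longrightarrow> dist (y t) (y t') \<le> 2 * M * dist t t'"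
    using euler_interpolations_limit[OF schemes h S] unfolding a_def by blast
  have "continuous_on {0..a} y"
    using lipschitz M by (intro lipschitz_on_continuous_on[of "2 * M"] lipschitz_onI) auto
  then have fy: "continuous_on {0..a} (f \<circ> y)"
    using yK by (intro continuous_on_compose continuous_on_subset[OF f]) auto
  have h\<sigma>: "(\<lambda>n. h (\<sigma> n)) \<longlonglongrightarrow> 0" using LIMSEQ_subseq_LIMSEQ[OF h \<sigma>] by (simp add: comp_def)
  have \<epsilon>\<sigma>: "(\<lambda>n. 1 / (real (\<sigma> n) + 1)) \<longlonglongrightarrow> 0"
    using LIMSEQ_subseq_LIMSEQ[OF one_over_Suc_tendsto_0 \<sigma>] by (simp add: comp_def)
  have yS: "y t \<in> S" if "t \<in> {0..a}" for t using yK[OF that] by blast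
  have "(y has_vector_derivative f (y t)) (at t within {0..a})" if t: "t \<in> {0..a}" for t
  proof (rule has_vector_derivative_from_forward_increments[OF fy _ t, unfolded o_def])
    fix e :: real assume "e > 0"
    from compact_uniformly_continuous[OF fK K] this obtain \<delta> where \<delta>: "\<delta> > 0"
      and osc: "\<And>q q'. q \<in> ?K \<Longrightarrow> q' \<in> ?K \<Longrightarrow> dist q' q < \<delta> \<Longrightarrow> dist (f q') (f q) < e"
      by (rule uniformly_continuous_onE) blast
    have uc: "norm (f q - f q') \<le> e" if "q \<in> ?K" "q' \<in> ?K" "dist q q' < \<delta>" for q q'
      using osc[OF that(2,1)] that(3) by (simp add: dist_norm)
    have "norm (y t' - y t - (t' - t) *\<^sub>R f (y t)) \<le> e * (t' - t)"
      if "t \<in> {0..a}" "t' \<in> {0..a}" "t \<le> t'" "t' - t < \<delta> / (2 * M)" for t t'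
    proof -
      have "2 * M * (t' - t) < \<delta>" using that(4) M(1) by (simp add: field_simps)
      then show ?thesis
        using euler_limit_forward_estimate[where X = "\<lambda>n. X (\<sigma> n)" and h = "\<lambda>n. h (\<sigma> n)",
            OF schemes h\<sigma> \<epsilon>\<sigma> f, folded a_def, of y, OF y yS uc _ that(1-3)] \<open>e > 0\<close>
        by (simp add: mult.commute)
    qed
    then show "\<exists>\<delta>>0. \<forall>t\<in>{0..a}. \<forall>t'\<in>{0..a}. t \<le> t' \<and> t' - t < \<delta> \<longrightarrow>
        norm (y t' - y t - (t' - t) *\<^sub>R f (y t)) \<le> e * (t' - t)"
      using \<delta> M(1) by (intro exI[of _ "\<delta> / (2 * M)"]) auto
  qed
  then show ?thesis
    unfolding forward_solvable_def using a y0 yK by blast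
qed

section \<open>Charts of a \<open>C\<^sup>1\<close> boundary\<close>

lemma gradient_linearization_bound:
  fixes g :: "'a::euclidean_space \<Rightarrow> real"
  assumes U: "convex U" and g: "\<And>x. x \<in> U \<Longrightarrow> (g has_derivative (\<lambda>h. G x \<bullet> h)) (at x)"
    and c: "c \<in> U" and a: "a \<in> U" and b: "b \<in> U"
    and G_osc: "\<And>x. x \<in> U \<Longrightarrow> norm (G x - G c) \<le> e"
  shows "\<bar>g b - g a - G c \<bullet> (b - a)\<bar> \<le> e * norm (b - a)"
proof -
  have "a + t *\<^sub>R (b - a) \<in> U" if "t \<in> {0..1}" for t
    using convexD[OF U a b, of "1 - t" t] that by (simp add: algebra_simps)
  moreover have "onorm ((\<lambda>h. G x \<bullet> h) - (\<lambda>h. G c \<bullet> h)) \<le> e" if "x \<in> U" for x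
  proof (rule onorm_le)
    fix h
    have "\<bar>(G x - G c) \<bullet> h\<bar> \<le> norm (G x - G c) * norm h" by (rule Cauchy_Schwarz_ineq2)
    also have "\<dots> \<le> e * norm h" using G_osc[OF that] by (simp add: mult_right_mono)
    finally show "norm (((\<lambda>h. G x \<bullet> h) - (\<lambda>h. G c \<bullet> h)) h) \<le> e * norm h"
      by (simp add: inner_diff_left)
  qed
  ultimately have "norm (g b - g a - G c \<bullet> (b - a)) \<le> norm (b - a) * e"
    using g c by (intro differentiable_bound_linearization[where f' = "\<lambda>x h. G x \<bullet> h"])
      (auto intro: has_derivative_at_withinI)
  then show ?thesis by (simp add: mult.commute)
qed

lemma directional_derivative:
  fixes g :: "'a::euclidean_space \<Rightarrow> real"
  assumes "(g has_derivative (\<lambda>h. G \<bullet> h)) (at y)"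
  shows "((\<lambda>t. g (y + t *\<^sub>R d)) has_real_derivative (G \<bullet> d)) (at 0)"
proof -
  have "((\<lambda>t. y + t *\<^sub>R d) has_derivative (\<lambda>t. t *\<^sub>R d)) (at 0)"
    by (auto intro!: derivative_eq_intros)
  from has_derivative_compose[OF this, of g "\<lambda>h. G \<bullet> h"] assms
  have "((\<lambda>t. g (y + t *\<^sub>R d)) has_derivative (\<lambda>t. G \<bullet> (t *\<^sub>R d))) (at 0)" by simp
  then show ?thesis unfolding has_field_derivative_def
    by (rule has_derivative_eq_rhs) (simp add: fun_eq_iff mult.commute)
qed

definition boundary_chart :: "'a::euclidean_space set \<Rightarrow> 'a \<Rightarrow> real \<Rightarrow> ('a \<Rightarrow> real) \<Rightarrow> ('a \<Rightarrow> 'a) \<Rightarrow> bool" where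
  "boundary_chart w z r g G \<longleftrightarrow> r > 0 \<and>
     (\<forall>y\<in>ball z r. (g has_derivative (\<lambda>h. G y \<bullet> h)) (at y) \<and> G y \<noteq> 0) \<and>
     continuous_on (ball z r) G \<and> w \<inter> ball z r = {y\<in>ball z r. g y < 0}"

lemma C1_boundary_normal_chart:
  assumes "C1_boundary_normal w nrm" "z \<in> frontier w"
  obtains r g G where "boundary_chart w z r g G" "nrm z = G z /\<^sub>R norm (G z)"
proof -
  obtain r g G where "r > 0"
    "\<forall>y\<in>ball z r. (g has_derivative (\<lambda>h. G y \<bullet> h)) (at y) \<and> G y \<noteq> 0"
    "continuous_on (ball z r) G" "w \<inter> ball z r = {y\<in>ball z r. g y < 0}" "nrm z = G z /\<^sub>R norm (G z)"
    using assms unfolding C1_boundary_normal_def by blast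
  then show ?thesis using that unfolding boundary_chart_def by blast
qed

context
  fixes w :: "'a::euclidean_space set" and z :: 'a and r :: real and g :: "'a \<Rightarrow> real" and G
  assumes chart: "boundary_chart w z r g G"
begin

lemma chart_derivative: "y \<in> ball z r \<Longrightarrow> (g has_derivative (\<lambda>h. G y \<bullet> h)) (at y)"
  and chart_gradient_nonzero: "y \<in> ball z r \<Longrightarrow> G y \<noteq> 0"
  and chart_gradient_continuous: "continuous_on (ball z r) G"
  and chart_radius_pos: "r > 0"
  and chart_inside_iff: "y \<in> ball z r \<Longrightarrow> y \<in> w \<longleftrightarrow> g y < 0"
  using chart unfolding boundary_chart_def by blast+

lemma chart_nonpos_on_closure:
  assumes y: "y \<in> ball z r" "y \<in> closure w"
  shows "g y \<le> 0"
proof (rule ccontr)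
  assume "\<not> g y \<le> 0"
  moreover have "isCont g y" using chart_derivative[OF y(1)] by (rule has_derivative_continuous)
  ultimately obtain d where "d > 0" and "\<And>x. dist x y < d \<Longrightarrow> dist (g x) (g y) < g y"
    unfolding continuous_at_eps_delta by (meson not_le)
  then have pos: "\<And>x. dist x y < d \<Longrightarrow> g x > 0" by (fastforce simp: dist_real_def)
  obtain d2 where "d2 > 0" "ball y d2 \<subseteq> ball z r" using y(1) open_contains_ball by blast
  then obtain x where "x \<in> w" "dist x y < min d d2"
    using y(2) \<open>d > 0\<close> unfolding closure_approachable by (metis min_less_iff_conj)
  then have "x \<in> ball y d2" "g x > 0" using pos by (auto simp: dist_commute)
  then have "x \<in> ball z r" "g x > 0" using \<open>ball y d2 \<subseteq> ball z r\<close> by auto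
  with \<open>x \<in> w\<close> chart_inside_iff show False by auto
qed

lemma chart_zero_on_frontier:
  assumes "open w" and y: "y \<in> ball z r" "y \<in> frontier w"
  shows "g y = 0"
  using chart_nonpos_on_closure[OF y(1)] chart_inside_iff[OF y(1)] y(2) \<open>open w\<close>
  by (force simp: frontier_def interior_open)

end

text \<open>The outward normal does not depend on the chart: otherwise a direction between the two
  normals would point into \<open>w\<close> for one chart and out of \<open>w\<close> for the other.\<close>

lemma chart_normal_unique:
  assumes "open w" and chart1: "boundary_chart w z1 r1 g1 G1" and chart2: "boundary_chart w z2 r2 g2 G2"
    and y: "y \<in> frontier w" "y \<in> ball z1 r1" "y \<in> ball z2 r2"
  shows "G1 y /\<^sub>R norm (G1 y) = G2 y /\<^sub>R norm (G2 y)"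
proof (rule ccontr)
  define a b where "a = G1 y /\<^sub>R norm (G1 y)" and "b = G2 y /\<^sub>R norm (G2 y)"
  assume "\<not> ?thesis"
  then have "a \<noteq> b" unfolding a_def b_def .
  have G1: "G1 y \<noteq> 0" and G2: "G2 y \<noteq> 0"
    using chart_gradient_nonzero[OF chart1 y(2)] chart_gradient_nonzero[OF chart2 y(3)] .
  have "norm a = 1" "norm b = 1" using G1 G2 unfolding a_def b_def by simp_all
  then have aa: "a \<bullet> a = 1" and bb: "b \<bullet> b = 1" by (simp_all add: norm_eq_1)
  have "0 < norm (a - b) ^ 2" using \<open>a \<noteq> b\<close> by simp
  also have "norm (a - b) ^ 2 = 2 - 2 * (a \<bullet> b)"
    by (simp add: power2_norm_eq_inner inner_diff_left inner_diff_right inner_commute aa bb)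
  finally have ab: "a \<bullet> b < 1" by simp
  have "G1 y = norm (G1 y) *\<^sub>R a" "G2 y = norm (G2 y) *\<^sub>R b"
    using G1 G2 by (simp_all add: a_def b_def)
  then have "G1 y \<bullet> (b - a) = norm (G1 y) * (a \<bullet> b - 1)"
    "G2 y \<bullet> (b - a) = norm (G2 y) * (1 - a \<bullet> b)"
    by (metis inner_scaleR_left inner_diff_right aa bb inner_commute)+
  then have d1: "G1 y \<bullet> (b - a) < 0" and d2: "G2 y \<bullet> (b - a) > 0"
    using G1 G2 ab by (simp_all add: mult_pos_neg)
  have "((\<lambda>t. g1 (y + t *\<^sub>R (b - a))) has_real_derivative G1 y \<bullet> (b - a)) (at 0)"
       "((\<lambda>t. g2 (y + t *\<^sub>R (b - a))) has_real_derivative G2 y \<bullet> (b - a)) (at 0)"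
    using chart_derivative[OF chart1 y(2)] chart_derivative[OF chart2 y(3)]
    by (auto intro: directional_derivative)
  moreover have "g1 y = 0" "g2 y = 0"
    using chart_zero_on_frontier[OF chart1 \<open>open w\<close> y(2,1)]
      chart_zero_on_frontier[OF chart2 \<open>open w\<close> y(3,1)] .
  ultimately obtain e1 e2 where "e1 > 0" "\<And>t. 0 < t \<Longrightarrow> t < e1 \<Longrightarrow> g1 (y + t *\<^sub>R (b - a)) < 0"
    and "e2 > 0" "\<And>t. 0 < t \<Longrightarrow> t < e2 \<Longrightarrow> g2 (y + t *\<^sub>R (b - a)) > 0"
    using DERIV_neg_dec_right[OF _ d1] DERIV_pos_inc_right[OF _ d2] by force
  moreover obtain e3 where "e3 > 0" "ball y e3 \<subseteq> ball z1 r1 \<inter> ball z2 r2"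
    using y open_contains_ball[of "ball z1 r1 \<inter> ball z2 r2"] by blast
  ultimately have "min (min e1 e2) (e3 / norm (b - a)) > 0" using \<open>a \<noteq> b\<close> by simp
  then obtain t where t: "0 < t" "t < e1" "t < e2" "t < e3 / norm (b - a)"
    using field_lbound_gt_zero dense by (metis min_less_iff_conj)
  then have "t * norm (b - a) < e3" using \<open>a \<noteq> b\<close> by (simp add: pos_less_divide_eq)
  then have "y + t *\<^sub>R (b - a) \<in> ball y e3" using t(1) by (simp add: dist_norm)
  then have "y + t *\<^sub>R (b - a) \<in> ball z1 r1 \<inter> ball z2 r2" using \<open>ball y e3 \<subseteq> _\<close> by blast
  then show False
    using t \<open>\<And>t. 0 < t \<Longrightarrow> t < e1 \<Longrightarrow> g1 (y + t *\<^sub>R (b - a)) < 0\<close>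
      \<open>\<And>t. 0 < t \<Longrightarrow> t < e2 \<Longrightarrow> g2 (y + t *\<^sub>R (b - a)) > 0\<close>
      chart_inside_iff[OF chart1] chart_inside_iff[OF chart2] by fastforce
qed

lemma C1_boundary_normal_in_chart:
  assumes "open w" "C1_boundary_normal w nrm" and chart: "boundary_chart w z r g G"
    and y: "y \<in> frontier w" "y \<in> ball z r"
  shows "nrm y = G y /\<^sub>R norm (G y)"
proof -
  obtain r' g' G' where chart': "boundary_chart w y r' g' G'" and "nrm y = G' y /\<^sub>R norm (G' y)"
    using C1_boundary_normal_chart[OF assms(2) y(1)] .
  moreover have "y \<in> ball y r'" using chart_radius_pos[OF chart'] by simp
  ultimately show ?thesis using chart_normal_unique[OF assms(1) chart chart' y(1,2)] by simp
qed

locale frontier_chart =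
  fixes w :: "'a::euclidean_space set" and nrm :: "'a \<Rightarrow> 'a" and z :: 'a and r0 r :: real
    and g :: "'a \<Rightarrow> real" and G :: "'a \<Rightarrow> 'a"
  assumes open_w: "open w" and C1: "C1_boundary_normal w nrm"
    and chart: "boundary_chart w z r0 g G"
    and r_pos: "r > 0" and r_le: "cball z r \<subseteq> ball z r0"
    and gradient_near: "\<And>x. x \<in> cball z r \<Longrightarrow> norm (G x - G z) \<le> norm (G z) / 4"
begin

definition \<nu> where "\<nu> = G z /\<^sub>R norm (G z)"

lemma gradient_center_pos: "norm (G z) > 0"
  using chart_gradient_nonzero[OF chart] chart_radius_pos[OF chart] by simp

lemma norm_\<nu>: "norm \<nu> = 1"
  using gradient_center_pos by (simp add: \<nu>_def)

lemma gradient_center_\<nu>: "G z \<bullet> \<nu> = norm (G z)"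
  using gradient_center_pos by (simp add: \<nu>_def power2_norm_eq_inner[symmetric] power2_eq_square)

lemma normal_component_lower:
  assumes "x \<in> cball z r" shows "3 / 4 * norm (G z) \<le> G x \<bullet> \<nu>"
proof -
  have "\<bar>(G x - G z) \<bullet> \<nu>\<bar> \<le> norm (G x - G z)"
    using Cauchy_Schwarz_ineq2[of "G x - G z" \<nu>] norm_\<nu> by simp
  moreover have "G x \<bullet> \<nu> = G z \<bullet> \<nu> + (G x - G z) \<bullet> \<nu>" by (simp add: inner_diff_left)
  ultimately show ?thesis using gradient_near[OF assms] gradient_center_\<nu> by linarith
qed

lemma gradient_upper:
  assumes "x \<in> cball z r" shows "norm (G x) \<le> 2 * norm (G z)"
proof -
  have "norm (G x) \<le> norm (G z) + norm (G x - G z)" using norm_triangle_sub[of "G x" "G z"] by simp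
  then show ?thesis using gradient_near[OF assms] gradient_center_pos by linarith
qed

lemma derivative_near: "x \<in> cball z r \<Longrightarrow> (g has_derivative (\<lambda>h. G x \<bullet> h)) (at x)"
  using chart_derivative[OF chart] r_le by blast

lemma inside_near: "x \<in> cball z r \<Longrightarrow> g x < 0 \<Longrightarrow> x \<in> w"
  using chart_inside_iff[OF chart] r_le by blast

lemma linearization_near:
  assumes "x \<in> cball z r" "y \<in> cball z r"
  shows "\<bar>g y - g x - G z \<bullet> (y - x)\<bar> \<le> norm (G z) / 4 * norm (y - x)"
proof -
  have "z \<in> cball z r" using r_pos by simp
  show ?thesis
    by (rule gradient_linearization_bound[OF convex_cball _ \<open>z \<in> cball z r\<close> assms])
      (erule derivative_near, erule gradient_near)
qed

lemma growth_le:
  assumes "x \<in> cball z r" "y \<in> cball z r"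
  shows "g y \<le> g x + 2 * norm (G z) * norm (y - x)"
proof -
  have "G z \<bullet> (y - x) \<le> norm (G z) * norm (y - x)"
    using Cauchy_Schwarz_ineq2 by (rule abs_le_D1)
  moreover have "norm (G z) / 4 * norm (y - x) \<le> norm (G z) * norm (y - x)"
    using gradient_center_pos by (simp add: mult_right_mono)
  ultimately show ?thesis using abs_le_D1[OF linearization_near[OF assms]] by linarith
qed

lemma rise_along_normal:
  assumes "x \<in> cball z r" "x + T *\<^sub>R \<nu> \<in> cball z r" "T \<ge> 0"
  shows "g x + 3 / 4 * norm (G z) * T \<le> g (x + T *\<^sub>R \<nu>)"
proof -
  have "G z \<bullet> (T *\<^sub>R \<nu>) = T * norm (G z)" using gradient_center_\<nu> by simp
  moreover have "norm (T *\<^sub>R \<nu>) = T" using norm_\<nu> assms(3) by simp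
  moreover have "- (g (x + T *\<^sub>R \<nu>) - g x - G z \<bullet> (T *\<^sub>R \<nu>)) \<le> norm (G z) / 4 * norm (T *\<^sub>R \<nu>)"
    using abs_le_D2[OF linearization_near[OF assms(1,2)]] by simp
  ultimately have "- (g (x + T *\<^sub>R \<nu>) - g x - T * norm (G z)) \<le> norm (G z) / 4 * T" by metis
  then show ?thesis by (simp add: field_simps)
qed

lemma frontier_point_near:
  assumes y: "y \<in> cball z r" "y \<in> closure w" and yT: "y + T *\<^sub>R \<nu> \<in> cball z r" and T: "T \<ge> 0"
    and shallow: "g y + 3 / 4 * norm (G z) * T > 0"
  obtains z' where "z' \<in> frontier w" "z' \<in> cball z r" "dist z' y \<le> T"
proof -
  have "g (y + T *\<^sub>R \<nu>) > 0" using rise_along_normal[OF y(1) yT T] shallow by linarith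
  then have "y + T *\<^sub>R \<nu> \<notin> w" using chart_inside_iff[OF chart] r_le yT by force
  obtain z' where z': "z' \<in> frontier w" "z' \<in> closed_segment y (y + T *\<^sub>R \<nu>)"
  proof (cases "y \<in> w")
    case True
    with \<open>y + T *\<^sub>R \<nu> \<notin> w\<close> have "closed_segment y (y + T *\<^sub>R \<nu>) \<inter> frontier w \<noteq> {}"
      by (intro connected_Int_frontier) auto
    then show ?thesis using that by blast
  next
    case False
    then have "y \<in> frontier w" using y(2) open_w by (simp add: frontier_def interior_open)
    then show ?thesis using that by auto
  qed
  moreover have "z' \<in> cball z r" using closed_segment_subset[OF y(1) yT] z'(2) by blast
  moreover have "dist z' y \<le> T"
    using dist_in_closed_segment[OF z'(2)] norm_\<nu> T by (simp add: dist_norm)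
  ultimately show ?thesis using that by blast
qed

lemma descent_near_frontier_point:
  fixes V :: "'a \<Rightarrow> 'a"
  assumes z': "z' \<in> frontier w" "z' \<in> cball z r" and tangent: "V z' \<bullet> nrm z' = 0"
    and y: "y \<in> cball z r" "dist z' y < \<delta>" "g y \<le> 0"
    and y': "y' = y + h *\<^sub>R V y - (h * \<epsilon>) *\<^sub>R \<nu>" "y' \<in> cball z r" "dist z' y' < \<delta>"
    and G_osc: "\<And>x. x \<in> cball z r \<Longrightarrow> dist z' x < \<delta> \<Longrightarrow>
                  norm (G x - G z') \<le> \<epsilon> * norm (G z) / (8 * (M + 1))"
    and V_osc: "norm (V y - V z') \<le> \<epsilon> / 8"
    and displacement: "norm (y' - y) \<le> h * (M + 1)"
    and h: "h > 0" and \<epsilon>: "\<epsilon> > 0" and M: "M \<ge> 0"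
  shows "g y' < 0"
proof -
  define P where "P = h * \<epsilon> * norm (G z)"
  have P: "P > 0" using h \<epsilon> gradient_center_pos by (simp add: P_def)
  have "\<delta> > 0" using y(2) zero_le_dist[of z' y] by linarith
  let ?U = "cball z r \<inter> ball z' \<delta>"
  have "g y' - g y - G z' \<bullet> (y' - y) \<le> \<epsilon> * norm (G z) / (8 * (M + 1)) * norm (y' - y)"
    by (rule abs_le_D1, rule gradient_linearization_bound[of ?U g G z' y y'])
      (use z' y y' G_osc derivative_near \<open>\<delta> > 0\<close> in \<open>auto simp: convex_Int dist_commute\<close>)
  moreover have "\<epsilon> * norm (G z) / (8 * (M + 1)) * norm (y' - y)
      \<le> \<epsilon> * norm (G z) / (8 * (M + 1)) * (h * (M + 1))"
    using displacement \<epsilon> M by (intro mult_left_mono) auto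
  moreover have "\<epsilon> * norm (G z) / (8 * (M + 1)) * (h * (M + 1)) = P / 8"
    using M by (simp add: P_def field_simps)
  moreover have "G z' \<bullet> V z' = 0"
  proof -
    have "z' \<in> ball z r0" using z'(2) r_le by blast
    then have "nrm z' = G z' /\<^sub>R norm (G z')"
      using C1_boundary_normal_in_chart[OF open_w C1 chart z'(1)] by blast
    moreover have "G z' \<noteq> 0" using chart_gradient_nonzero[OF chart \<open>z' \<in> ball z r0\<close>] .
    ultimately show ?thesis using tangent by (simp add: inner_commute)
  qed
  then have "G z' \<bullet> (y' - y) = h * (G z' \<bullet> (V y - V z')) - h * \<epsilon> * (G z' \<bullet> \<nu>)"
    unfolding y'(1) by (simp add: inner_diff_right inner_add_right algebra_simps)
  moreover have "h * (G z' \<bullet> (V y - V z')) \<le> P / 4"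
  proof -
    have "G z' \<bullet> (V y - V z') \<le> norm (G z') * norm (V y - V z')" by (rule norm_cauchy_schwarz)
    also have "\<dots> \<le> 2 * norm (G z) * (\<epsilon> / 8)"
      using gradient_upper[OF z'(2)] V_osc by (intro mult_mono) auto
    finally show ?thesis using h by (simp add: P_def mult_left_mono field_simps)
  qed
  moreover have "3 / 4 * P \<le> h * \<epsilon> * (G z' \<bullet> \<nu>)"
    using mult_left_mono[OF normal_component_lower[OF z'(2)], of "h * \<epsilon>"] h \<epsilon>
    by (simp add: P_def field_simps)
  ultimately have "g y' \<le> g y - 3 / 8 * P" by linarith
  then show ?thesis using y(3) P by linarith
qed

text \<open>If \<open>y\<close> is deep inside (\<open>g y < -2 |G z| D\<close>), the step stays inside by continuity. Otherwise
  the normal segment from \<open>y\<close> meets the frontier at some \<open>z'\<close> within \<open>4 D\<close>, where tangency makes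
  \<open>V\<close> almost orthogonal to \<open>G z'\<close>, so the inward correction \<open>-h \<epsilon> \<nu>\<close> makes \<open>g\<close> decrease.\<close>

lemma push_inside:
  fixes V :: "'a \<Rightarrow> 'a"
  assumes tangent: "\<And>x. x \<in> frontier w \<Longrightarrow> V x \<bullet> nrm x = 0"
    and V_bound: "norm (V y) \<le> M"
    and V_osc: "\<And>x. x \<in> closure w \<Longrightarrow> x \<in> cball z r \<Longrightarrow> dist x y < \<delta> \<Longrightarrow>
                  norm (V y - V x) \<le> \<epsilon> / 8"
    and G_osc: "\<And>x x'. x \<in> cball z r \<Longrightarrow> x' \<in> cball z r \<Longrightarrow> dist x x' < \<delta> \<Longrightarrow>
                  norm (G x - G x') \<le> \<epsilon> * norm (G z) / (8 * (M + 1))"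
    and y: "y \<in> closure w" "dist z y \<le> r / 2"
    and h: "h > 0" "5 * (h * (M + 1)) \<le> r / 2" "5 * (h * (M + 1)) < \<delta>"
    and \<epsilon>: "0 < \<epsilon>" "\<epsilon> \<le> 1" and M: "M \<ge> 0"
  shows "y + h *\<^sub>R V y - (h * \<epsilon>) *\<^sub>R \<nu> \<in> w"
proof -
  define y' D where "y' = y + h *\<^sub>R V y - (h * \<epsilon>) *\<^sub>R \<nu>" and "D = h * (M + 1)"
  have D: "D > 0" "5 * D \<le> r / 2" "5 * D < \<delta>" using h M by (simp_all add: D_def)
  have "norm (y' - y) \<le> norm (h *\<^sub>R V y) + norm ((h * \<epsilon>) *\<^sub>R \<nu>)"
    unfolding y'_def using norm_triangle_ineq4[of "h *\<^sub>R V y" "(h * \<epsilon>) *\<^sub>R \<nu>"] by simp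
  also have "\<dots> \<le> h * M + h * 1"
    using h V_bound \<epsilon> norm_\<nu> by (intro add_mono mult_left_mono) auto
  finally have displacement: "norm (y' - y) \<le> D" by (simp add: D_def algebra_simps)
  have yB: "y \<in> cball z r" using y r_pos by simp
  have "dist z y' \<le> dist z y + norm (y' - y)"
    using dist_triangle[of z y' y] by (simp add: dist_norm norm_minus_commute)
  then have y'B: "y' \<in> cball z r" using displacement y(2) D by simp
  have gy: "g y \<le> 0" using chart_nonpos_on_closure[OF chart] yB r_le y(1) by blast
  consider "g y < - (2 * norm (G z) * D)" | "- (2 * norm (G z) * D) \<le> g y" by linarith
  then have "g y' < 0"
  proof cases
    case 1
    have "2 * norm (G z) * norm (y' - y) \<le> 2 * norm (G z) * D"
      using displacement gradient_center_pos by (intro mult_left_mono) auto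
    then show ?thesis using growth_le[OF yB y'B] 1 by linarith
  next
    case 2
    have "dist y (y + (4 * D) *\<^sub>R \<nu>) = 4 * D" using norm_\<nu> D by (simp add: dist_norm)
    then have "y + (4 * D) *\<^sub>R \<nu> \<in> cball z r"
      using dist_triangle[of z "y + (4 * D) *\<^sub>R \<nu>" y] y(2) D by simp
    moreover have "0 < D * norm (G z)" using D gradient_center_pos by simp
    ultimately obtain z' where z': "z' \<in> frontier w" "z' \<in> cball z r" "dist z' y \<le> 4 * D"
      using frontier_point_near[OF yB y(1), of "4 * D"] 2 D by (force simp: algebra_simps)
    have "dist z' y' \<le> dist z' y + norm (y' - y)"
      using dist_triangle[of z' y' y] by (simp add: dist_norm norm_minus_commute)
    then have close: "z' \<in> cball z r" "dist z' y < \<delta>" "dist z' y' < \<delta>"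
      using z' displacement D by auto
    have G_osc': "norm (G x - G z') \<le> \<epsilon> * norm (G z) / (8 * (M + 1))"
      if "x \<in> cball z r" "dist z' x < \<delta>" for x
      using G_osc[OF that(1) close(1)] that(2) by (simp add: dist_commute)
    have V_osc': "norm (V y - V z') \<le> \<epsilon> / 8"
      using V_osc[OF _ close(1)] close(2) z'(1) by (simp add: dist_commute frontier_def)
    show ?thesis
      using descent_near_frontier_point[OF z'(1) close(1) tangent[OF z'(1)] yB close(2) gy y'_def y'B
          close(3) G_osc' V_osc' displacement[unfolded D_def] h(1) \<epsilon>(1) M] .
  qed
  then show ?thesis using inside_near[OF y'B] unfolding y'_def by blast
qed

end

section \<open>Local solutions in the closed cylinder\<close>

lemma frontier_chart_exists:
  assumes "open w" "C1_boundary_normal w nrm" "z \<in> frontier w"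
  obtains r0 r g G where "frontier_chart w nrm z r0 r g G"
proof -
  obtain r0 g G where chart: "boundary_chart w z r0 g G"
    using C1_boundary_normal_chart[OF assms(2,3)] by blast
  have z: "z \<in> ball z r0" using chart_radius_pos[OF chart] by simp
  have "norm (G z) / 4 > 0" using chart_gradient_nonzero[OF chart z] by simp
  then obtain d where d: "d > 0" "\<And>x. x \<in> ball z r0 \<Longrightarrow> dist x z < d \<Longrightarrow> dist (G x) (G z) < norm (G z) / 4"
    using chart_gradient_continuous[OF chart] z unfolding continuous_on_iff by blast
  define r where "r = min d r0 / 2"
  have r: "r > 0" "cball z r \<subseteq> ball z r0"
    using d(1) chart_radius_pos[OF chart] by (auto simp: r_def)
  have "norm (G x - G z) \<le> norm (G z) / 4" if "x \<in> cball z r" for x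
  proof -
    have "dist x z < d" using that d(1) by (simp add: r_def dist_commute)
    then show ?thesis using d(2)[of x] r(2) that by (force simp: dist_norm)
  qed
  then have "frontier_chart w nrm z r0 r g G"
    using assms chart r by unfold_locales
  then show ?thesis by (rule that)
qed

context frontier_chart
begin

lemma cylinder_push_inside:
  fixes f :: "real \<times> 'a \<Rightarrow> real \<times> 'a"
  assumes tangent: "\<And>s x. x \<in> frontier w \<Longrightarrow> snd (f (s, x)) \<bullet> nrm x = 0"
    and f_bound: "norm (f (s, y)) \<le> M"
    and f_osc: "\<And>x. x \<in> closure w \<Longrightarrow> x \<in> cball z r \<Longrightarrow> dist x y < \<delta> \<Longrightarrow>
                  dist (f (s, x)) (f (s, y)) \<le> \<epsilon> / 8"
    and G_osc: "\<And>x x'. x \<in> cball z r \<Longrightarrow> x' \<in> cball z r \<Longrightarrow> dist x x' < \<delta> \<Longrightarrow>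
                  norm (G x - G x') \<le> \<epsilon> * norm (G z) / (8 * (M + 1))"
    and y: "y \<in> closure w" "dist z y \<le> r / 2"
    and h: "h > 0" "5 * (h * (M + 1)) \<le> r / 2" "5 * (h * (M + 1)) < \<delta>"
    and \<epsilon>: "0 < \<epsilon>" "\<epsilon> \<le> 1"
  shows "\<exists>q'\<in>UNIV \<times> closure w. dist q' ((s, y) + h *\<^sub>R f (s, y)) \<le> \<epsilon> * h"
proof -
  let ?V = "\<lambda>x. snd (f (s, x))"
  have snd_le: "norm (snd v) \<le> norm v" for v :: "real \<times> 'a"
    by (metis norm_snd_le prod.collapse)
  have V_osc: "norm (?V y - ?V x) \<le> \<epsilon> / 8"
    if "x \<in> closure w" "x \<in> cball z r" "dist x y < \<delta>" for x
  proof -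
    have "norm (?V y - ?V x) \<le> dist (f (s, x)) (f (s, y))"
      using snd_le[of "f (s, y) - f (s, x)"] by (simp add: dist_norm norm_minus_commute)
    also have "\<dots> \<le> \<epsilon> / 8" using f_osc[OF that] .
    finally show ?thesis .
  qed
  have V_bound: "norm (?V y) \<le> M" using order_trans[OF snd_le f_bound] .
  have M: "M \<ge> 0" using order_trans[OF norm_ge_zero f_bound] .
  define q' where "q' = (s + h * fst (f (s, y)), y + h *\<^sub>R ?V y - (h * \<epsilon>) *\<^sub>R \<nu>)"
  have "q' \<in> UNIV \<times> closure w"
    using push_inside[OF tangent V_bound V_osc G_osc y h \<epsilon> M] closure_subset by (auto simp: q'_def)
  moreover have "(s, y) + h *\<^sub>R f (s, y) = (s + h * fst (f (s, y)), y + h *\<^sub>R ?V y)"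
    by (simp add: prod_eq_iff)
  then have "dist q' ((s, y) + h *\<^sub>R f (s, y)) = \<epsilon> * h"
    using norm_\<nu> h(1) \<epsilon>(1) by (simp add: q'_def dist_Pair_Pair dist_norm)
  ultimately show ?thesis by (intro bexI[of _ q']) auto
qed

lemma cylinder_subtangential_step:
  fixes f :: "real \<times> 'a \<Rightarrow> real \<times> 'a" and p :: "real \<times> 'a"
  defines "K \<equiv> (UNIV \<times> closure w) \<inter> cball p r"
  assumes tangent: "\<And>s x. x \<in> frontier w \<Longrightarrow> snd (f (s, x)) \<bullet> nrm x = 0" and p: "snd p = z"
    and f_bound: "\<And>q. q \<in> K \<Longrightarrow> norm (f q) \<le> M"
    and f_osc: "\<And>q q'. q \<in> K \<Longrightarrow> q' \<in> K \<Longrightarrow> dist q' q < \<delta> \<Longrightarrow> dist (f q') (f q) < \<epsilon> / 8"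
    and G_osc: "\<And>x x'. x \<in> cball z r \<Longrightarrow> x' \<in> cball z r \<Longrightarrow> dist x' x < \<delta> \<Longrightarrow>
                  dist (G x') (G x) < \<epsilon> * norm (G z) / (8 * (M + 1))"
    and q: "q \<in> (UNIV \<times> closure w) \<inter> cball p (r / 2)"
    and h: "h > 0" "10 * (h * (M + 1)) \<le> \<delta>" and \<delta>: "\<delta> \<le> r / 2"
    and \<epsilon>: "0 < \<epsilon>" "\<epsilon> \<le> 1"
  shows "\<exists>q'\<in>UNIV \<times> closure w. dist q' (q + h *\<^sub>R f q) \<le> \<epsilon> * h"
proof -
  obtain s y where q_eq: "q = (s, y)" by fastforce
  have qK: "q \<in> K" using q r_pos by (auto simp: K_def)
  have M: "M \<ge> 0" using order_trans[OF norm_ge_zero f_bound[OF qK]] .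
  have y: "y \<in> closure w" "dist z y \<le> r / 2"
    using q dist_snd_le[of p q] by (auto simp: q_eq p)
  have "10 * (h * (M + 1)) > 0" using h M by simp
  then have h': "5 * (h * (M + 1)) \<le> r / 2" "5 * (h * (M + 1)) < \<delta>" using h(2) \<delta> by linarith+
  have "dist (f (s, x)) (f (s, y)) \<le> \<epsilon> / 8"
    if "x \<in> closure w" "x \<in> cball z r" "dist x y < \<delta>" for x
  proof -
    have "dist q (s, x) = dist x y" by (simp add: q_eq dist_Pair_Pair dist_commute)
    moreover have "dist p (s, x) \<le> dist p q + dist q (s, x)" by (rule dist_triangle)
    ultimately have "(s, x) \<in> K" using q that \<delta> by (simp add: K_def q_eq)
    with \<open>dist q (s, x) = dist x y\<close> show ?thesis
      using f_osc[OF qK] that(3) by (fastforce simp: q_eq dist_commute)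
  qed
  moreover have "norm (G x - G x') \<le> \<epsilon> * norm (G z) / (8 * (M + 1))"
    if "x \<in> cball z r" "x' \<in> cball z r" "dist x x' < \<delta>" for x x'
    using G_osc[OF that(2,1)] that(3) by (simp add: dist_norm)
  ultimately show ?thesis
    using cylinder_push_inside[OF tangent f_bound[OF qK, unfolded q_eq] _ _ y h(1) h' \<epsilon>]
    by (simp add: q_eq)
qed

end

lemma interior_uniformly_subtangential:
  fixes f :: "'b::euclidean_space \<Rightarrow> 'b"
  assumes S: "closed S" and f: "continuous_on S f" and p: "p \<in> interior S"
  obtains r where "r > 0" "uniformly_subtangential S f p r"
proof -
  obtain r where r: "r > 0" "cball p r \<subseteq> S" using p unfolding mem_interior_cball by blast
  have K: "compact (S \<inter> cball p r)" using S by (simp add: closed_Int_compact)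
  have fK: "continuous_on (S \<inter> cball p r) f" using f by (rule continuous_on_subset) auto
  obtain M where M: "M \<ge> 1" "\<And>q. q \<in> S \<inter> cball p r \<Longrightarrow> norm (f q) \<le> M"
    using compact_norm_bound[OF K fK] by blast
  have "uniformly_subtangential S f p (r / 2)"
    unfolding uniformly_subtangential_def
  proof (intro allI impI exI[of _ "r / (2 * M)"] conjI ballI)
    show "r / (2 * M) > 0" using r M by simp
    fix \<epsilon> :: real and q h assume "\<epsilon> > 0" and q: "q \<in> S \<inter> cball p (r / 2)"
      and h: "0 < h \<and> h \<le> r / (2 * M)"
    have "norm (h *\<^sub>R f q) \<le> h * M" using M(2)[of q] q r h by (simp add: mult_left_mono)
    also have "\<dots> \<le> r / 2" using h M by (simp add: field_simps)
    finally have "dist p (q + h *\<^sub>R f q) \<le> r"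
      using q dist_triangle[of p "q + h *\<^sub>R f q" q] by (simp add: dist_norm)
    then show "\<exists>q'\<in>S. dist q' (q + h *\<^sub>R f q) \<le> \<epsilon> * h"
      using r(2) \<open>\<epsilon> > 0\<close> h by (intro bexI[of _ "q + h *\<^sub>R f q"]) auto
  qed
  then show ?thesis using r(1) by (intro that[of "r / 2"]) auto
qed

lemma cylinder_frontier_uniformly_subtangential:
  fixes f :: "real \<times> 'a::euclidean_space \<Rightarrow> real \<times> 'a"
  assumes w: "open w" and C1: "C1_boundary_normal w nrm"
    and f: "continuous_on (UNIV \<times> closure w) f"
    and tangent: "\<And>s x. x \<in> frontier w \<Longrightarrow> snd (f (s, x)) \<bullet> nrm x = 0"
    and p: "snd p \<in> frontier w"
  obtains r where "r > 0" "uniformly_subtangential (UNIV \<times> closure w) f p r"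
proof -
  obtain r0 r g G where "frontier_chart w nrm (snd p) r0 r g G"
    using frontier_chart_exists[OF w C1 p] .
  then interpret frontier_chart w nrm "snd p" r0 r g G .
  let ?K = "(UNIV \<times> closure w) \<inter> cball p r"
  have K: "compact ?K" by (intro closed_Int_compact closed_Times) auto
  have fK: "continuous_on ?K f" using f by (rule continuous_on_subset) auto
  obtain M where M: "M \<ge> 1" "\<And>q. q \<in> ?K \<Longrightarrow> norm (f q) \<le> M"
    using compact_norm_bound[OF K fK] by blast
  have GB: "continuous_on (cball (snd p) r) G"
    using chart_gradient_continuous[OF chart] r_le by (rule continuous_on_subset)
  have "uniformly_subtangential (UNIV \<times> closure w) f p (r / 2)"
    unfolding uniformly_subtangential_def
  proof (intro allI impI)
    fix \<epsilon> :: real assume "\<epsilon> > 0"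
    define \<epsilon>' where "\<epsilon>' = min \<epsilon> 1"
    have \<epsilon>': "0 < \<epsilon>'" "\<epsilon>' \<le> 1" "\<epsilon>' \<le> \<epsilon>" using \<open>\<epsilon> > 0\<close> by (auto simp: \<epsilon>'_def)
    have "\<epsilon>' * norm (G (snd p)) / (8 * (M + 1)) > 0" using \<epsilon>' gradient_center_pos M by simp
    with compact_uniformly_continuous[OF GB compact_cball]
    obtain \<delta>G where "\<delta>G > 0" and G_osc: "\<And>x x'. x \<in> cball (snd p) r \<Longrightarrow> x' \<in> cball (snd p) r \<Longrightarrow>
        dist x' x < \<delta>G \<Longrightarrow> dist (G x') (G x) < \<epsilon>' * norm (G (snd p)) / (8 * (M + 1))"
      by (rule uniformly_continuous_onE) blast
    have "\<epsilon>' / 8 > 0" using \<epsilon>' by simp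
    with compact_uniformly_continuous[OF fK K]
    obtain \<delta>f where "\<delta>f > 0" and f_osc: "\<And>q q'. q \<in> ?K \<Longrightarrow> q' \<in> ?K \<Longrightarrow> dist q' q < \<delta>f \<Longrightarrow>
        dist (f q') (f q) < \<epsilon>' / 8"
      by (rule uniformly_continuous_onE) blast
    define \<delta> where "\<delta> = min (min \<delta>G \<delta>f) (r / 2)"
    have \<delta>: "\<delta> > 0" "\<delta> \<le> r / 2" using \<open>\<delta>G > 0\<close> \<open>\<delta>f > 0\<close> r_pos by (auto simp: \<delta>_def)
    show "\<exists>h0>0. \<forall>q\<in>(UNIV \<times> closure w) \<inter> cball p (r / 2). \<forall>h. 0 < h \<and> h \<le> h0 \<longrightarrow>
        (\<exists>q'\<in>UNIV \<times> closure w. dist q' (q + h *\<^sub>R f q) \<le> \<epsilon> * h)"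
    proof (intro exI[of _ "\<delta> / (10 * (M + 1))"] conjI ballI allI impI)
      show "\<delta> / (10 * (M + 1)) > 0" using \<delta> M by simp
      fix q h assume q: "q \<in> (UNIV \<times> closure w) \<inter> cball p (r / 2)"
        and h: "0 < h \<and> h \<le> \<delta> / (10 * (M + 1))"
      then have "10 * (h * (M + 1)) \<le> \<delta>" using M by (simp add: field_simps)
      then obtain q' where "q' \<in> UNIV \<times> closure w" "dist q' (q + h *\<^sub>R f q) \<le> \<epsilon>' * h"
        using cylinder_subtangential_step[OF tangent refl M(2), of \<delta> \<epsilon>' q h] f_osc G_osc q h \<delta>(2) \<epsilon>'
        by (force simp: \<delta>_def)
      moreover have "\<epsilon>' * h \<le> \<epsilon> * h" using \<epsilon>' h by (simp add: mult_right_mono)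
      ultimately show "\<exists>q'\<in>UNIV \<times> closure w. dist q' (q + h *\<^sub>R f q) \<le> \<epsilon> * h"
        by (intro bexI[of _ q']) auto
    qed
  qed
  then show ?thesis using r_pos by (intro that[of "r / 2"]) auto
qed

lemma cylinder_forward_solvable:
  fixes f :: "real \<times> 'a::euclidean_space \<Rightarrow> real \<times> 'a"
  assumes w: "open w" and C1: "C1_boundary_normal w nrm"
    and f: "continuous_on (closure (UNIV \<times> w)) f"
    and tangent: "\<forall>p\<in>frontier (UNIV \<times> w). f p \<bullet> (0, nrm (snd p)) = 0"
    and p: "p \<in> closure (UNIV \<times> w)"
  shows "forward_solvable f (closure (UNIV \<times> w)) p"
proof -
  have S: "closure (UNIV \<times> w) = UNIV \<times> closure w" by (simp add: closure_Times)
  have frontier: "frontier (UNIV \<times> w) = UNIV \<times> frontier w"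
    using w by (auto simp: frontier_def closure_Times interior_Times interior_open)
  have tangent': "snd (f (s, x)) \<bullet> nrm x = 0" if "x \<in> frontier w" for s x
    using tangent that unfolding frontier by (force simp: inner_Pair_0)
  obtain r where "r > 0" "uniformly_subtangential (UNIV \<times> closure w) f p r"
  proof (cases "snd p \<in> w")
    case True
    then have "p \<in> interior (UNIV \<times> closure w)"
      using w interior_maximal[OF closure_subset] by (auto simp: interior_Times mem_Times_iff)
    then show ?thesis
      using interior_uniformly_subtangential f that unfolding S by (blast intro: closed_Times)
  next
    case False
    then have "snd p \<in> frontier w" using p w by (auto simp: S frontier_def interior_open)
    with cylinder_frontier_uniformly_subtangential[OF w C1 f[unfolded S] tangent'] that
    show ?thesis by blast
  qed
  then show ?thesis
    unfolding S using p f
    by (intro subtangential_imp_forward_solvable) (auto simp: S intro: closed_Times)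
qed

section \<open>Escape of gradient flows\<close>

lemma open_interval_Sup:
  fixes I :: "real set"
  assumes I: "is_interval I" "open I" "t0 \<in> I" and bdd: "bdd_above I"
  shows "Sup I \<notin> I" and "\<And>t. t \<in> I \<Longrightarrow> t < Sup I" and "t0 < Sup I"
    and "\<And>t. t0 \<le> t \<Longrightarrow> t < Sup I \<Longrightarrow> t \<in> I"
proof -
  show notin: "Sup I \<notin> I"
  proof
    assume "Sup I \<in> I"
    then obtain e where "e > 0" "ball (Sup I) e \<subseteq> I" using I(2) open_contains_ball by blast
    then have "Sup I + e / 2 \<in> I" by (auto simp: dist_real_def)
    then show False using cSup_upper[OF _ bdd] \<open>e > 0\<close> by force
  qed
  show less: "t < Sup I" if "t \<in> I" for t
    using cSup_upper[OF that bdd] notin that by (metis order.not_eq_order_implies_strict)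
  show "t0 < Sup I" using less[OF I(3)] .
  show "t \<in> I" if t: "t0 \<le> t" "t < Sup I" for t
  proof -
    obtain b where "b \<in> I" "t < b" using t(2) less_cSup_iff[OF _ bdd] I(3) by blast
    then show ?thesis using I(1) I(3) t(1) unfolding is_interval_1 by (meson less_imp_le)
  qed
qed

lemma has_vector_derivative_from_one_sided:
  fixes \<zeta> :: "real \<Rightarrow> 'b::real_normed_vector"
  assumes left: "\<And>e. e > 0 \<Longrightarrow> \<exists>d>0. \<forall>t. T - d < t \<and> t < T \<longrightarrow>
                   norm (\<zeta> T - \<zeta> t - (T - t) *\<^sub>R u) \<le> e * (T - t)"
    and right: "\<And>e. e > 0 \<Longrightarrow> \<exists>d>0. \<forall>t. T \<le> t \<and> t < T + d \<longrightarrow>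
                   norm (\<zeta> t - \<zeta> T - (t - T) *\<^sub>R u) \<le> e * (t - T)"
  shows "(\<zeta> has_vector_derivative u) (at T)"
  unfolding has_vector_derivative_def has_derivative_at_alt
proof (intro conjI allI impI bounded_linear_scaleR_left)
  fix e :: real assume "e > 0"
  obtain dL dR where "dL > 0" "dR > 0"
    and L: "\<And>t. T - dL < t \<Longrightarrow> t < T \<Longrightarrow> norm (\<zeta> T - \<zeta> t - (T - t) *\<^sub>R u) \<le> e * (T - t)"
    and R: "\<And>t. T \<le> t \<Longrightarrow> t < T + dR \<Longrightarrow> norm (\<zeta> t - \<zeta> T - (t - T) *\<^sub>R u) \<le> e * (t - T)"
    using left[OF \<open>e > 0\<close>] right[OF \<open>e > 0\<close>] by blast
  show "\<exists>d>0. \<forall>t. norm (t - T) < d \<longrightarrow> norm (\<zeta> t - \<zeta> T - (t - T) *\<^sub>R u) \<le> e * norm (t - T)"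
  proof (intro exI[of _ "min dL dR"] conjI allI impI)
    show "min dL dR > 0" using \<open>dL > 0\<close> \<open>dR > 0\<close> by simp
    fix t assume close: "norm (t - T) < min dL dR"
    show "norm (\<zeta> t - \<zeta> T - (t - T) *\<^sub>R u) \<le> e * norm (t - T)"
    proof (cases "t < T")
      case True
      have "\<zeta> t - \<zeta> T - (t - T) *\<^sub>R u = - (\<zeta> T - \<zeta> t - (T - t) *\<^sub>R u)" by (simp add: algebra_simps)
      then show ?thesis using L[of t] close True by (simp only: norm_minus_cancel) simp
    next
      case False
      then show ?thesis using R[of t] close by simp
    qed
  qed
qed

lemma vector_derivative_increment_bound:
  fixes f :: "real \<Rightarrow> 'b::real_normed_vector"
  assumes "t \<le> t'" and f: "\<And>s. s \<in> {t..t'} \<Longrightarrow> (f has_vector_derivative f' s) (at s within {t..t'})"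
    and bound: "\<And>s. s \<in> {t..t'} \<Longrightarrow> norm (f' s - u) \<le> e"
  shows "norm (f t' - f t - (t' - t) *\<^sub>R u) \<le> e * (t' - t)"
proof -
  have "((\<lambda>s. f s - s *\<^sub>R u) has_derivative (\<lambda>h. h *\<^sub>R (f' s - u))) (at s within {t..t'})"
    if "s \<in> {t..t'}" for s
    using f[OF that] unfolding has_vector_derivative_def
    by (auto intro!: derivative_eq_intros simp: scaleR_diff_right)
  moreover have "onorm (\<lambda>h. h *\<^sub>R (f' s - u)) \<le> e" if "s \<in> {t..t'}" for s
  proof (rule onorm_le)
    fix h :: real
    show "norm (h *\<^sub>R (f' s - u)) \<le> e * norm h"
      using mult_right_mono[OF bound[OF that] abs_ge_zero[of h]] by (simp add: mult.commute)
  qed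
  ultimately have "norm ((f t' - t' *\<^sub>R u) - (f t - t *\<^sub>R u)) \<le> e * norm (t' - t)"
    using assms(1) by (intro differentiable_bound[OF convex_real_interval(5)]) auto
  then show ?thesis using assms(1) by (simp add: algebra_simps)
qed

lemma eventually_in_upper_end:
  fixes I :: "real set"
  assumes I: "is_interval I" "open I" "t0 \<in> I"
  shows "\<forall>\<^sub>F t in upper_end I. t \<in> I"
proof (cases "bdd_above I")
  case True
  note Sup = open_interval_Sup[OF I True]
  have "\<forall>\<^sub>F t in at_left (Sup I). t \<in> {t0<..<Sup I}" using Sup(3) by (rule eventually_at_left_real)
  then show ?thesis
    unfolding upper_end_def using True by (simp add: eventually_mono Sup(4))
next
  case False
  have "t \<in> I" if "t \<ge> t0" for t
  proof -
    obtain b where "b \<in> I" "t < b" using False unfolding bdd_above_def by (meson not_le)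
    then show ?thesis using I(1,3) that unfolding is_interval_1 by (meson less_imp_le)
  qed
  then have "\<forall>\<^sub>F t in at_top. t \<in> I" unfolding eventually_at_top_linorder by blast
  with False show ?thesis by (simp add: upper_end_def)
qed

lemma has_vector_derivative_shift_interior:
  fixes y :: "real \<Rightarrow> 'b::real_normed_vector"
  assumes y: "(y has_vector_derivative y') (at (t - T) within {0..a})" and t: "t - T \<in> {0<..<a}"
  shows "((\<lambda>s. y (s - T)) has_vector_derivative y') (at t)"
proof -
  have "(y has_vector_derivative y') (at (t - T) within {0<..<a})"
    using y by (rule has_vector_derivative_within_subset) auto
  then have "(y has_derivative (\<lambda>h. h *\<^sub>R y')) (at (t - T))"
    using at_within_open[OF t] by (simp add: has_vector_derivative_def)
  moreover have "((\<lambda>s. s - T) has_derivative (\<lambda>h. h)) (at t)" by (auto intro!: derivative_eq_intros)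
  ultimately show ?thesis
    unfolding has_vector_derivative_def by (rule has_derivative_compose[rotated])
qed

locale gradient_flow =
  fixes v :: "'b::euclidean_space \<Rightarrow> 'b" and psi :: "'b \<Rightarrow> real" and S :: "'b set" and \<eta> :: real
  assumes closed_S: "closed S"
    and psi_derivative: "\<And>p. p \<in> S \<Longrightarrow> (psi has_derivative (\<lambda>h. v p \<bullet> h)) (at p within S)"
    and psi_continuous: "continuous_on S psi"
    and v_continuous: "continuous_on S v"
    and \<eta>_pos: "\<eta> > 0" and v_lower: "\<And>p. p \<in> S \<Longrightarrow> \<eta> \<le> norm (v p)"
    and forward_solvable: "\<And>p. p \<in> S \<Longrightarrow> forward_solvable v S p"
begin

context
  fixes x I xi
  assumes sol: "flow_sol v S x I xi"
begin

lemma sol_interval: "is_interval I" "open I" "0 \<in> I" "xi 0 = x"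
  and sol_in_S: "t \<in> I \<Longrightarrow> xi t \<in> S"
  and sol_derivative: "t \<in> I \<Longrightarrow> (xi has_vector_derivative v (xi t)) (at t)"
  using sol unfolding flow_sol_def by auto

lemma sol_between: "a \<in> I \<Longrightarrow> b \<in> I \<Longrightarrow> a \<le> t \<Longrightarrow> t \<le> b \<Longrightarrow> t \<in> I"
  using sol_interval(1) unfolding is_interval_1 by blast

lemma psi_sol_derivative:
  assumes t: "t \<in> I"
  shows "((\<lambda>t. psi (xi t)) has_real_derivative (norm (v (xi t)))\<^sup>2) (at t)"
proof -
  have "(xi has_derivative (\<lambda>h. h *\<^sub>R v (xi t))) (at t within I)"
    using sol_derivative[OF t] unfolding has_vector_derivative_def by (rule has_derivative_at_withinI)
  then have "((\<lambda>s. psi (xi s)) has_derivative (\<lambda>h. v (xi t) \<bullet> (h *\<^sub>R v (xi t)))) (at t within I)"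
    using sol_in_S by (intro has_derivative_in_compose2[of S psi "\<lambda>p h. v p \<bullet> h", OF psi_derivative _ t])
      auto
  then have "((\<lambda>s. psi (xi s)) has_derivative (\<lambda>h. v (xi t) \<bullet> (h *\<^sub>R v (xi t)))) (at t)"
    using at_within_open[OF t sol_interval(2)] by simp
  then show ?thesis unfolding has_field_derivative_def
    by (rule has_derivative_eq_rhs) (simp add: fun_eq_iff power2_norm_eq_inner mult.commute)
qed

lemma psi_sol_growth:
  assumes "t \<in> I" "t' \<in> I" "t \<le> t'"
  shows "psi (xi t) + \<eta>\<^sup>2 * (t' - t) \<le> psi (xi t')"
proof -
  have "psi (xi t) - \<eta>\<^sup>2 * t \<le> psi (xi t') - \<eta>\<^sup>2 * t'"
  proof (rule DERIV_nonneg_imp_nondecreasing[OF assms(3)])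
    fix s assume "t \<le> s" "s \<le> t'"
    then have s: "s \<in> I" using sol_between assms by blast
    have "((\<lambda>s. psi (xi s) - \<eta>\<^sup>2 * s) has_real_derivative (norm (v (xi s)))\<^sup>2 - \<eta>\<^sup>2) (at s)"
      by (auto intro!: derivative_eq_intros psi_sol_derivative[OF s])
    moreover have "\<eta>\<^sup>2 \<le> (norm (v (xi s)))\<^sup>2"
      using v_lower[OF sol_in_S[OF s]] \<eta>_pos by (simp add: power_mono)
    ultimately show "\<exists>y. ((\<lambda>s. psi (xi s) - \<eta>\<^sup>2 * s) has_real_derivative y) (at s) \<and> 0 \<le> y"
      by auto
  qed
  then show ?thesis by (simp add: algebra_simps)
qed

text \<open>With \<open>c\<close> the direction of the displacement, \<open>psi \<circ> xi / \<eta> - c \<bullet> xi\<close> is nondecreasing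
  because \<open>c \<bullet> v \<le> |v| \<le> |v|\<^sup>2 / \<eta>\<close>.\<close>

lemma sol_displacement_le:
  assumes "t \<in> I" "t' \<in> I" "t \<le> t'"
  shows "norm (xi t' - xi t) \<le> (psi (xi t') - psi (xi t)) / \<eta>"
proof (cases "xi t' = xi t")
  case True
  then show ?thesis using psi_sol_growth[OF assms] \<eta>_pos assms(3) by simp
next
  case False
  define c where "c = (xi t' - xi t) /\<^sub>R norm (xi t' - xi t)"
  have "norm c = 1" using False by (simp add: c_def)
  have "psi (xi t) / \<eta> - c \<bullet> xi t \<le> psi (xi t') / \<eta> - c \<bullet> xi t'"
  proof (rule DERIV_nonneg_imp_nondecreasing[OF assms(3)])
    fix s assume "t \<le> s" "s \<le> t'"
    then have s: "s \<in> I" using sol_between assms by blast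
    have "((\<lambda>s. c \<bullet> xi s) has_real_derivative c \<bullet> v (xi s)) (at s)"
      using sol_derivative[OF s] unfolding has_vector_derivative_def has_field_derivative_def
      by (auto intro!: derivative_eq_intros simp: mult.commute)
    then have "((\<lambda>s. psi (xi s) / \<eta> - c \<bullet> xi s) has_real_derivative
        (norm (v (xi s)))\<^sup>2 / \<eta> - c \<bullet> v (xi s)) (at s)"
      using \<eta>_pos by (auto intro!: derivative_eq_intros psi_sol_derivative[OF s])
    moreover have "c \<bullet> v (xi s) \<le> (norm (v (xi s)))\<^sup>2 / \<eta>"
    proof -
      have "c \<bullet> v (xi s) \<le> norm (v (xi s))"
        using norm_cauchy_schwarz[of c "v (xi s)"] \<open>norm c = 1\<close> by simp
      also have "\<dots> \<le> (norm (v (xi s)))\<^sup>2 / \<eta>"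
        using v_lower[OF sol_in_S[OF s]] \<eta>_pos
        by (simp add: pos_le_divide_eq power2_eq_square mult_left_mono)
      finally show ?thesis .
    qed
    ultimately show "\<exists>y. ((\<lambda>s. psi (xi s) / \<eta> - c \<bullet> xi s) has_real_derivative y) (at s) \<and> 0 \<le> y"
      by auto
  qed
  moreover have "c \<bullet> (xi t' - xi t) = norm (xi t' - xi t)"
    using False by (simp add: c_def power2_norm_eq_inner[symmetric] power2_eq_square)
  ultimately show ?thesis by (simp add: inner_diff_right diff_divide_distrib)
qed

lemma norm_at_top_if_psi_at_top:
  assumes lim: "filterlim (\<lambda>t. psi (xi t)) at_top F" and ev: "\<forall>\<^sub>F t in F. t \<in> I"
  shows "filterlim (\<lambda>t. norm (xi t)) at_top F"
  unfolding filterlim_at_top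
proof
  fix Z :: real
  have K: "compact (S \<inter> cball 0 \<bar>Z\<bar>)" using closed_S by (simp add: closed_Int_compact)
  have "continuous_on (S \<inter> cball 0 \<bar>Z\<bar>) psi" using psi_continuous by (rule continuous_on_subset) auto
  then obtain B where B: "\<And>q. q \<in> S \<inter> cball 0 \<bar>Z\<bar> \<Longrightarrow> norm (psi q) \<le> B"
    using compact_norm_bound[OF K] by blast
  have "\<forall>\<^sub>F t in F. B < psi (xi t)" using lim unfolding filterlim_at_top_dense by blast
  with ev show "\<forall>\<^sub>F t in F. Z \<le> norm (xi t)"
  proof eventually_elim
    case (elim t)
    show ?case
    proof (rule ccontr)
      assume "\<not> Z \<le> norm (xi t)"
      then have "xi t \<in> S \<inter> cball 0 \<bar>Z\<bar>" using sol_in_S[OF elim(1)] by simp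
      then have "psi (xi t) \<le> B" using B by fastforce
      with elim(2) show False by linarith
    qed
  qed
qed

end

context
  fixes x I xi
  assumes sol: "flow_sol v S x I xi" and bdd: "bdd_above I"
begin

lemmas sol_interval_Sup = open_interval_Sup[OF sol_interval(1-3)[OF sol] bdd]

lemma sol_left_limit:
  assumes L: "\<And>t. t \<in> I \<Longrightarrow> psi (xi t) \<le> L"
  obtains pT where "pT \<in> S" "(xi \<longlongrightarrow> pT) (at_left (Sup I))"
proof -
  define Ls where "Ls = (SUP t\<in>I. psi (xi t))"
  have bdd_psi: "bdd_above ((\<lambda>t. psi (xi t)) ` I)" using L by (intro bdd_aboveI2)
  have "I \<noteq> {}" using sol_interval(3)[OF sol] by blast
  have cauchy: "cauchy_filter (filtermap xi (at_left (Sup I)))"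
    unfolding cauchy_filter_metric_filtermap
  proof (intro allI impI)
    fix e :: real assume "e > 0"
    then have "Ls - e * \<eta> / 2 < Ls" using \<eta>_pos by simp
    then obtain t0 where t0: "t0 \<in> I" "Ls - e * \<eta> / 2 < psi (xi t0)"
      unfolding Ls_def using less_cSUP_iff[OF \<open>I \<noteq> {}\<close> bdd_psi] by blast
    have mem: "t \<in> I" if "t0 \<le> t" "t < Sup I" for t
      using open_interval_Sup(4)[OF sol_interval(1,2)[OF sol] t0(1) bdd] that .
    have one: "norm (xi t' - xi t) < e" if "t0 \<le> t" "t \<le> t'" "t' < Sup I" for t t'
    proof -
      have I: "t \<in> I" "t' \<in> I" using mem that by auto
      have "norm (xi t' - xi t) \<le> (psi (xi t') - psi (xi t)) / \<eta>"
        by (rule sol_displacement_le[OF sol I that(2)])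
      also have "\<dots> \<le> (Ls - psi (xi t0)) / \<eta>"
      proof (rule divide_right_mono)
        have "0 \<le> \<eta>\<^sup>2 * (t - t0)" using that(1) by simp
        then show "psi (xi t') - psi (xi t) \<le> Ls - psi (xi t0)"
          using cSUP_upper[OF I(2) bdd_psi] psi_sol_growth[OF sol t0(1) I(1) that(1)]
          unfolding Ls_def by linarith
      qed (use \<eta>_pos in simp)
      also have "\<dots> < e"
        using t0(2) \<eta>_pos mult_pos_pos[OF \<open>e > 0\<close> \<eta>_pos] by (simp add: pos_divide_less_eq)
      finally show ?thesis .
    qed
    have ev: "\<forall>\<^sub>F t in at_left (Sup I). t0 < t \<and> t < Sup I"
      using eventually_at_left_real[OF sol_interval_Sup(2)[OF t0(1)]] by simp
    have "dist (xi t) (xi t') < e" if "t0 < t" "t0 < t'" "t < Sup I" "t' < Sup I" for t t'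
      using one[of t t'] one[of t' t] that by (cases "t \<le> t'") (auto simp: dist_norm norm_minus_commute)
    with ev show "\<exists>P. eventually P (at_left (Sup I)) \<and> (\<forall>t t'. P t \<and> P t' \<longrightarrow> dist (xi t) (xi t') < e)"
      by (intro exI[of _ "\<lambda>t. t0 < t \<and> t < Sup I"]) auto
  qed
  have "filtermap xi (at_left (Sup I)) \<noteq> bot" by (simp add: filtermap_bot_iff)
  then obtain pT where "filtermap xi (at_left (Sup I)) \<le> nhds pT"
    using cauchy_filter_complete_converges[OF cauchy complete_UNIV] by auto
  then have lim: "(xi \<longlongrightarrow> pT) (at_left (Sup I))" by (simp add: filterlim_def)
  have "\<forall>\<^sub>F t in at_left (Sup I). xi t \<in> S"
    using eventually_at_left_real[OF sol_interval_Sup(3)]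
    by eventually_elim (auto intro!: sol_in_S[OF sol] sol_interval_Sup(4))
  then have "pT \<in> S" using Lim_in_closed_set[OF closed_S _ _ lim] by simp
  then show ?thesis using lim by (rule that)
qed

lemma sol_left_linearization:
  assumes pT: "pT \<in> S" and lim: "(xi \<longlongrightarrow> pT) (at_left (Sup I))" and e: "e > 0"
  shows "\<exists>d>0. \<forall>t. Sup I - d < t \<and> t < Sup I \<longrightarrow>
           norm (pT - xi t - (Sup I - t) *\<^sub>R v pT) \<le> e * (Sup I - t)"
proof -
  let ?T = "Sup I"
  obtain \<rho> where "\<rho> > 0" and \<rho>: "\<And>q. q \<in> S \<Longrightarrow> dist q pT < \<rho> \<Longrightarrow> dist (v q) (v pT) < e"
    using v_continuous pT e unfolding continuous_on_iff by metis
  have "\<forall>\<^sub>F t in at_left ?T. dist (xi t) pT < \<rho>" using lim \<open>\<rho> > 0\<close> by (rule tendstoD)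
  moreover have "\<forall>\<^sub>F t in at_left ?T. 0 < t \<and> t < ?T"
    using eventually_at_left_real[OF sol_interval_Sup(3)] by simp
  ultimately have "\<forall>\<^sub>F t in at_left ?T. t \<in> I \<and> dist (xi t) pT < \<rho>"
    by eventually_elim (auto intro: sol_interval_Sup(4))
  then obtain b where "b < ?T"
    and b: "\<And>t. b < t \<Longrightarrow> t < ?T \<Longrightarrow> t \<in> I \<and> dist (xi t) pT < \<rho>"
    unfolding eventually_at_left_field by blast
  have near: "norm (xi t' - xi t - (t' - t) *\<^sub>R v pT) \<le> e * (t' - t)"
    if "b < t" "t \<le> t'" "t' < ?T" for t t'
  proof -
    have "s \<in> I \<and> dist (xi s) pT < \<rho>" if "s \<in> {t..t'}" for s using b that \<open>b < t\<close> \<open>t' < ?T\<close> by auto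
    then show ?thesis
      using sol_derivative[OF sol] sol_in_S[OF sol] \<rho> that(2)
      by (intro vector_derivative_increment_bound)
        (auto intro: has_vector_derivative_at_within simp: dist_norm less_imp_le)
  qed
  show ?thesis
  proof (intro exI[of _ "?T - b"] conjI allI impI)
    show "?T - b > 0" using \<open>b < ?T\<close> by simp
    fix t assume t: "?T - (?T - b) < t \<and> t < ?T"
    have L1: "((\<lambda>t'. norm (xi t' - xi t - (t' - t) *\<^sub>R v pT)) \<longlongrightarrow> norm (pT - xi t - (?T - t) *\<^sub>R v pT))
        (at_left ?T)"
      by (intro tendsto_intros lim)
    have L2: "((\<lambda>t'. e * (t' - t)) \<longlongrightarrow> e * (?T - t)) (at_left ?T)"
      by (intro tendsto_intros)
    have "\<forall>\<^sub>F t' in at_left ?T. t' \<in> {t<..<?T}"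
      using t by (intro eventually_at_left_real) simp
    then have ev: "\<forall>\<^sub>F t' in at_left ?T. norm (xi t' - xi t - (t' - t) *\<^sub>R v pT) \<le> e * (t' - t)"
      by eventually_elim (use near t in auto)
    from tendsto_le[OF trivial_limit_at_left_real L2 L1 ev]
    show "norm (pT - xi t - (?T - t) *\<^sub>R v pT) \<le> e * (?T - t)" .
  qed
qed

lemma glued_derivative_at_Sup:
  assumes pT: "pT \<in> S" and lim: "(xi \<longlongrightarrow> pT) (at_left (Sup I))"
    and y0: "y 0 = pT" and y: "(y has_vector_derivative v pT) (at 0 within {0..a})" and a: "a > 0"
  shows "((\<lambda>t. if t < Sup I then xi t else y (t - Sup I)) has_vector_derivative v pT) (at (Sup I))"
proof -
  define \<zeta> where "\<zeta> = (\<lambda>t. if t < Sup I then xi t else y (t - Sup I))"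
  have "(\<zeta> has_vector_derivative v pT) (at (Sup I))"
  proof (rule has_vector_derivative_from_one_sided)
    fix e :: real assume "e > 0"
    then show "\<exists>d>0. \<forall>t. Sup I - d < t \<and> t < Sup I \<longrightarrow>
        norm (\<zeta> (Sup I) - \<zeta> t - (Sup I - t) *\<^sub>R v pT) \<le> e * (Sup I - t)"
      using sol_left_linearization[OF pT lim] y0 by (simp add: \<zeta>_def)
  next
    fix e :: real assume "e > 0"
    with y obtain d where "d > 0" and d: "\<And>s. s \<in> {0..a} \<Longrightarrow> norm (s - 0) < d \<Longrightarrow>
        norm (y s - y 0 - (s - 0) *\<^sub>R v pT) \<le> e * norm (s - 0)"
      unfolding has_vector_derivative_def has_derivative_within_alt by blast
    then show "\<exists>d>0. \<forall>t. Sup I \<le> t \<and> t < Sup I + d \<longrightarrow>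
        norm (\<zeta> t - \<zeta> (Sup I) - (t - Sup I) *\<^sub>R v pT) \<le> e * (t - Sup I)"
      using a by (intro exI[of _ "min d a"]) (auto simp: \<zeta>_def)
  qed
  then show ?thesis unfolding \<zeta>_def .
qed

lemma glued_sol:
  assumes pT: "pT \<in> S" and lim: "(xi \<longlongrightarrow> pT) (at_left (Sup I))" and a: "a > 0" and y0: "y 0 = pT"
    and yS: "\<And>t. t \<in> {0..a} \<Longrightarrow> y t \<in> S"
    and y: "\<And>t. t \<in> {0..a} \<Longrightarrow> (y has_vector_derivative v (y t)) (at t within {0..a})"
  shows "flow_sol v S x (I \<union> {0<..<Sup I + a}) (\<lambda>t. if t < Sup I then xi t else y (t - Sup I))"
proof -
  let ?T = "Sup I" and ?J = "I \<union> {0<..<Sup I + a}"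
  define \<zeta> where "\<zeta> = (\<lambda>t. if t < ?T then xi t else y (t - ?T))"
  note Sup = sol_interval_Sup
  have "?T / 2 \<in> I \<inter> {0<..<?T + a}" using Sup(3,4) a by auto
  then have "is_interval ?J"
    unfolding is_interval_connected_1
    using sol_interval(1)[OF sol] by (intro connected_Un) (auto simp: is_interval_connected_1)
  moreover have "open ?J" using sol_interval(2)[OF sol] by auto
  moreover have "0 \<in> ?J" "\<zeta> 0 = x" using sol_interval(3,4)[OF sol] Sup(3) by (auto simp: \<zeta>_def)
  moreover have "\<zeta> t \<in> S \<and> (\<zeta> has_vector_derivative v (\<zeta> t)) (at t)" if "t \<in> ?J" for t
  proof (cases t ?T rule: linorder_cases)
    case less
    have "t \<in> I"
    proof (cases "t \<in> I")
      case False
      then show ?thesis using that less Sup(4) by simp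
    qed
    have "(\<zeta> has_vector_derivative v (xi t)) (at t)"
    proof (rule has_vector_derivative_transform_within_open)
      show "(xi has_vector_derivative v (xi t)) (at t)" by (rule sol_derivative[OF sol \<open>t \<in> I\<close>])
      show "open (I \<inter> {..<?T})" "t \<in> I \<inter> {..<?T}" using sol_interval(2)[OF sol] \<open>t \<in> I\<close> less by auto
    qed (simp add: \<zeta>_def)
    then show ?thesis using sol_in_S[OF sol \<open>t \<in> I\<close>] less by (simp add: \<zeta>_def)
  next
    case equal
    have "(y has_vector_derivative v (y 0)) (at 0 within {0..a})" using y[of 0] a by simp
    then have y0': "(y has_vector_derivative v pT) (at 0 within {0..a})" by (simp only: y0)
    show ?thesis
      using glued_derivative_at_Sup[OF pT lim y0 y0' a] pT y0 equal by (simp add: \<zeta>_def)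
  next
    case greater
    then have "t \<notin> I" using Sup(2) less_asym by blast
    then have s: "t - ?T \<in> {0<..<a}" using that greater by simp
    have "(\<zeta> has_vector_derivative v (y (t - ?T))) (at t)"
    proof (rule has_vector_derivative_transform_within_open)
      show "((\<lambda>s. y (s - ?T)) has_vector_derivative v (y (t - ?T))) (at t)"
        using y[of "t - ?T"] s by (intro has_vector_derivative_shift_interior) auto
      show "open {?T<..<?T + a}" "t \<in> {?T<..<?T + a}" using s by auto
    qed (simp add: \<zeta>_def)
    then show ?thesis using yS s greater by (simp add: \<zeta>_def)
  qed
  ultimately have "flow_sol v S x ?J \<zeta>" unfolding flow_sol_def by blast
  then show ?thesis unfolding \<zeta>_def .
qed

end

lemma max_sol_no_limit_at_Sup:
  assumes mf: "max_flow_sol v S x I xi" and bdd: "bdd_above I"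
    and pT: "pT \<in> S" and lim: "(xi \<longlongrightarrow> pT) (at_left (Sup I))"
  shows False
proof -
  have sol: "flow_sol v S x I xi" using mf by (simp add: max_flow_sol_def)
  note Sup = sol_interval_Sup[OF sol bdd]
  obtain a y where a: "a > 0" and y0: "y 0 = pT" and yS: "\<And>t. t \<in> {0..a} \<Longrightarrow> y t \<in> S"
    and y: "\<And>t. t \<in> {0..a} \<Longrightarrow> (y has_vector_derivative v (y t)) (at t within {0..a})"
    using forward_solvable[OF pT] unfolding forward_solvable_def by blast
  have maximal: "\<And>J \<zeta>. flow_sol v S x J \<zeta> \<Longrightarrow> I \<subseteq> J \<Longrightarrow> \<forall>t\<in>I. \<zeta> t = xi t \<Longrightarrow> J = I"
    using mf unfolding max_flow_sol_def by blast
  have "\<forall>t\<in>I. (if t < Sup I then xi t else y (t - Sup I)) = xi t" using Sup(2) by auto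
  then have "I \<union> {0<..<Sup I + a} = I"
    by (intro maximal[OF glued_sol[OF sol bdd pT lim a y0 yS y]]) auto
  moreover have "Sup I \<in> I \<union> {0<..<Sup I + a}" using Sup(3) a by simp
  ultimately show False using Sup(1) by simp
qed

lemma max_sol_psi_at_top_at_Sup:
  assumes mf: "max_flow_sol v S x I xi" and bdd: "bdd_above I"
  shows "filterlim (\<lambda>t. psi (xi t)) at_top (at_left (Sup I))"
  unfolding filterlim_at_top
proof
  fix Z
  have sol: "flow_sol v S x I xi" using mf by (simp add: max_flow_sol_def)
  obtain t0 where t0: "t0 \<in> I" "Z \<le> psi (xi t0)"
  proof (rule ccontr)
    assume "\<not> thesis"
    with that have "\<And>t. t \<in> I \<Longrightarrow> psi (xi t) \<le> Z" by force
    then obtain pT where "pT \<in> S" "(xi \<longlongrightarrow> pT) (at_left (Sup I))"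
      by (rule sol_left_limit[OF sol bdd])
    then show False by (rule max_sol_no_limit_at_Sup[OF mf bdd])
  qed
  note Sup = open_interval_Sup[OF sol_interval(1,2)[OF sol] t0(1) bdd]
  have "\<forall>\<^sub>F t in at_left (Sup I). t \<in> {t0<..<Sup I}" using Sup(3) by (rule eventually_at_left_real)
  then show "\<forall>\<^sub>F t in at_left (Sup I). Z \<le> psi (xi t)"
  proof eventually_elim
    case (elim t)
    then have "psi (xi t0) + \<eta>\<^sup>2 * (t - t0) \<le> psi (xi t)"
      using Sup(4) by (intro psi_sol_growth[OF sol t0(1)]) auto
    moreover have "0 \<le> \<eta>\<^sup>2 * (t - t0)" using elim by simp
    ultimately show ?case using t0(2) by linarith
  qed
qed

lemma sol_psi_at_top_unbounded:
  assumes sol: "flow_sol v S x I xi" and unbdd: "\<not> bdd_above I"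
  shows "filterlim (\<lambda>t. psi (xi t)) at_top at_top"
proof -
  note I = sol_interval[OF sol]
  have "t \<in> I" if "t \<ge> 0" for t
  proof -
    obtain b where "b \<in> I" "t < b" using unbdd unfolding bdd_above_def by (meson not_le)
    then show ?thesis using sol_between[OF sol I(3)] that by simp
  qed
  then have growth: "psi (xi 0) + \<eta>\<^sup>2 * t \<le> psi (xi t)" if "t \<ge> 0" for t
    using psi_sol_growth[OF sol I(3)] that by force
  have "filterlim (\<lambda>t. psi (xi 0) + \<eta>\<^sup>2 * t) at_top at_top"
    using \<eta>_pos by (intro filterlim_tendsto_add_at_top[OF tendsto_const]
        filterlim_tendsto_pos_mult_at_top[OF tendsto_const _ filterlim_ident]) auto
  moreover have "\<forall>\<^sub>F t in at_top. psi (xi 0) + \<eta>\<^sup>2 * t \<le> psi (xi t)"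
    using eventually_ge_at_top[of 0] by eventually_elim (rule growth)
  ultimately show ?thesis by (rule filterlim_at_top_mono)
qed

lemma max_sol_upper_escape:
  assumes mf: "max_flow_sol v S x I xi"
  shows "filterlim (\<lambda>t. norm (xi t)) at_top (upper_end I)"
    and "filterlim (\<lambda>t. psi (xi t)) at_top (upper_end I)"
proof -
  have sol: "flow_sol v S x I xi" using mf by (simp add: max_flow_sol_def)
  show "filterlim (\<lambda>t. psi (xi t)) at_top (upper_end I)"
    using max_sol_psi_at_top_at_Sup[OF mf] sol_psi_at_top_unbounded[OF sol]
    by (simp add: upper_end_def)
  then show "filterlim (\<lambda>t. norm (xi t)) at_top (upper_end I)"
    using eventually_in_upper_end[OF sol_interval(1-3)[OF sol]]
    by (rule norm_at_top_if_psi_at_top[OF sol])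
qed

end

section \<open>Time reversal and the theorem\<close>

lemma flow_sol_reverse:
  assumes sol: "flow_sol v S x I xi"
  shows "flow_sol (\<lambda>p. - v p) S x (uminus ` I) (\<lambda>t. xi (- t))"
proof -
  have I: "is_interval I" "open I" "0 \<in> I" "xi 0 = x"
    and xi: "\<And>t. t \<in> I \<Longrightarrow> xi t \<in> S \<and> (xi has_vector_derivative v (xi t)) (at t)"
    using sol unfolding flow_sol_def by auto
  have deriv: "((\<lambda>t. xi (- t)) has_vector_derivative - v (xi (- t))) (at t)" if "- t \<in> I" for t
  proof -
    have "(xi has_derivative (\<lambda>h. h *\<^sub>R v (xi (- t)))) (at (- t))"
      using xi[OF that] unfolding has_vector_derivative_def by blast
    moreover have "(uminus has_derivative uminus) (at t)" by (auto intro!: derivative_eq_intros)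
    ultimately have "((\<lambda>t. xi (- t)) has_derivative (\<lambda>h. (- h) *\<^sub>R v (xi (- t)))) (at t)"
      using has_derivative_compose[of uminus uminus t UNIV xi "\<lambda>h. h *\<^sub>R v (xi (- t))"] by simp
    then show ?thesis unfolding has_vector_derivative_def by (simp add: scaleR_minus_right)
  qed
  have "\<forall>t\<in>uminus ` I. xi (- t) \<in> S \<and> ((\<lambda>t. xi (- t)) has_vector_derivative - v (xi (- t))) (at t)"
  proof
    fix t assume "t \<in> uminus ` I"
    then have "- t \<in> I" by force
    then show "xi (- t) \<in> S \<and> ((\<lambda>t. xi (- t)) has_vector_derivative - v (xi (- t))) (at t)"
      using xi deriv by blast
  qed
  moreover have "is_interval (uminus ` I)" using I(1) by (simp add: is_interval_neg_translationI)
  moreover have "open (uminus ` I)" using open_negations[OF I(2)] by simp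
  moreover have "0 \<in> uminus ` I" using I(3) by force
  ultimately show ?thesis using I(4) unfolding flow_sol_def by simp
qed

lemma max_flow_sol_reverse:
  assumes mf: "max_flow_sol v S x I xi"
  shows "max_flow_sol (\<lambda>p. - v p) S x (uminus ` I) (\<lambda>t. xi (- t))"
  unfolding max_flow_sol_def
proof (intro conjI allI impI)
  show "flow_sol (\<lambda>p. - v p) S x (uminus ` I) (\<lambda>t. xi (- t))"
    using mf unfolding max_flow_sol_def by (blast intro: flow_sol_reverse)
  fix J \<zeta>
  assume ext: "flow_sol (\<lambda>p. - v p) S x J \<zeta> \<and> uminus ` I \<subseteq> J \<and> (\<forall>t\<in>uminus ` I. \<zeta> t = xi (- t))"
  then have "flow_sol v S x (uminus ` J) (\<lambda>t. \<zeta> (- t))" using flow_sol_reverse[of "\<lambda>p. - v p"] by auto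
  moreover have "I \<subseteq> uminus ` J" "\<forall>t\<in>I. \<zeta> (- t) = xi t" using ext by (auto simp: image_iff) force
  ultimately have "uminus ` J = I" using mf unfolding max_flow_sol_def by blast
  then show "J = uminus ` I" by (auto simp: image_image)
qed

lemma lower_end_reverse: "lower_end I = filtermap uminus (upper_end (uminus ` I))"
proof (cases "bdd_below I")
  case True
  then have "bdd_above (uminus ` I)" by (simp add: bdd_above_uminus_image)
  moreover have "Inf I = - Sup (uminus ` I)" by (simp add: Inf_real_def)
  ultimately show ?thesis
    using True at_right_minus[of "- Sup (uminus ` I)"] by (simp add: lower_end_def upper_end_def)
next
  case False
  then have "\<not> bdd_above (uminus ` I)" by (simp add: bdd_above_uminus_image)
  with False show ?thesis by (simp add: lower_end_def upper_end_def at_bot_mirror)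
qed

lemma gradient_flow_cylinder:
  fixes w :: "'a::euclidean_space set" and psi :: "real \<times> 'a \<Rightarrow> real" and v :: "real \<times> 'a \<Rightarrow> real \<times> 'a"
  assumes "open w" and "C1_boundary_normal w nrm"
    and "\<forall>p\<in>closure (UNIV \<times> w). (psi has_derivative (\<lambda>h. v p \<bullet> h)) (at p within closure (UNIV \<times> w))"
    and "continuous_on (closure (UNIV \<times> w)) psi"
    and "continuous_on (closure (UNIV \<times> w)) v"
    and "\<forall>p\<in>frontier (UNIV \<times> w). v p \<bullet> (0, nrm (snd p)) = 0"
    and "(INF p\<in>closure (UNIV \<times> w). norm (v p)) > 0"
  shows "gradient_flow v psi (closure (UNIV \<times> w)) (INF p\<in>closure (UNIV \<times> w). norm (v p))"
proof
  show "(INF p\<in>closure (UNIV \<times> w). norm (v p)) \<le> norm (v p)" if "p \<in> closure (UNIV \<times> w)" for p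
    using that by (intro cINF_lower bdd_belowI[of _ 0]) auto
qed (use assms cylinder_forward_solvable in auto)

theorem lemma2p1:
  fixes w :: "'a::euclidean_space set"
    and nrm :: "'a \<Rightarrow> 'a"
    and psi :: "real \<times> 'a \<Rightarrow> real"
    and v :: "real \<times> 'a \<Rightarrow> real \<times> 'a"
    and v' :: "real \<times> 'a \<Rightarrow> (real \<times> 'a) \<Rightarrow>\<^sub>L (real \<times> 'a)"
  assumes "bounded w" and "connected w" and "open w"
    and "C1_boundary_normal w nrm"
    and "\<forall>p\<in>UNIV \<times> w. (psi has_derivative (\<lambda>h. v p \<bullet> h)) (at p)"
    and "\<forall>p\<in>closure (UNIV \<times> w). (psi has_derivative (\<lambda>h. v p \<bullet> h)) (at p within closure (UNIV \<times> w))"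
    and "continuous_on (closure (UNIV \<times> w)) psi"
    and "\<forall>p\<in>UNIV \<times> w. (v has_derivative blinfun_apply (v' p)) (at p)"
    and "continuous_on (UNIV \<times> w) v'"
    and "continuous_on (closure (UNIV \<times> w)) v"
    and "\<forall>p\<in>frontier (UNIV \<times> w). v p \<bullet> (0, nrm (snd p)) = 0"
    and "(INF p\<in>closure (UNIV \<times> w). norm (v p)) > 0"
    and "x \<in> closure (UNIV \<times> w)"
    and "max_flow_sol v (closure (UNIV \<times> w)) x I xi"
  shows "filterlim (\<lambda>t. norm (xi t)) at_top (lower_end I)
     \<and> filterlim (\<lambda>t. norm (xi t)) at_top (upper_end I)
     \<and> filterlim (\<lambda>t. psi (xi t)) at_bot (lower_end I)
     \<and> filterlim (\<lambda>t. psi (xi t)) at_top (upper_end I)"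
proof -
  let ?S = "closure (UNIV \<times> w)"
  interpret forward: gradient_flow v psi ?S "INF p\<in>?S. norm (v p)"
    using gradient_flow_cylinder assms(3,4,6,7,10-12) .
  interpret backward: gradient_flow "\<lambda>p. - v p" "\<lambda>p. - psi p" ?S "INF p\<in>?S. norm (v p)"
    using gradient_flow_cylinder[of w nrm "\<lambda>p. - psi p" "\<lambda>p. - v p"] assms(3,4,6,7,10-12)
    by (simp add: has_derivative_minus continuous_on_minus)
  note forward = forward.max_sol_upper_escape[OF assms(14)]
  note backward = backward.max_sol_upper_escape[OF max_flow_sol_reverse[OF assms(14)]]
  have "filterlim (\<lambda>t. norm (xi t)) at_top (lower_end I)"
    using backward(1) by (simp add: lower_end_reverse filterlim_filtermap)
  moreover have "filterlim (\<lambda>t. psi (xi t)) at_bot (lower_end I)"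
    using backward(2) by (simp add: lower_end_reverse filterlim_filtermap filterlim_uminus_at_bot)
  ultimately show ?thesis using forward by blast
qed

end
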